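(* Let $k$ be a field, $R$ a standard graded $k$-algebra and $a\in R_1$. If $M$ is a finitely generated graded $R$-module such that there is an isomorphism of graded $R$-modules $(M/aM)(-1)\cong(0:_M a)$, then $$H_M(t)=(1+t)H_{M/aM}(t).$$ In particular, if $a,b\in R_1$ form an exact pair of zero divisors, then $H_R(t)=(1+t)H_{R/aR}(t)$, and hence $H_R(-1)=0$.
   Context: A standard graded $k$-algebra is a commutative graded ring $R=\bigoplus_{n\ge0}R_n$ with $R_0=k$, finitely generated as a $k$-algebra by $R_1$. For a finitely generated graded $R$-module $M=\bigoplus_n M_n$, its Hilbert series is $H_M(t)=\sum_n\operatorname{rank}_k(M_n)t^n$; $M(-1)$ denotes the shift with $M(-1)_n=M_{n-1}$. Elements $a,b\in R$ form an exact pair of zero divisors if $a,b$ are nonzero non-units with $(0:_R a)=bR$ and $(0:_R b)=aR$. *)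

theory Defs
  imports Main "HOL-Computational_Algebra.Formal_Laurent_Series" "HOL-Computational_Algebra.Polynomial_FPS"
begin

inductive_set alg_gen :: "('k \<Rightarrow> 'r::comm_ring_1) \<Rightarrow> 'r set \<Rightarrow> 'r set"
  for iota :: "'k \<Rightarrow> 'r" and S :: "'r set" where
  const: "iota c \<in> alg_gen iota S"
| gen: "s \<in> S \<Longrightarrow> s \<in> alg_gen iota S"
| add: "x \<in> alg_gen iota S \<Longrightarrow> y \<in> alg_gen iota S \<Longrightarrow> x + y \<in> alg_gen iota S"
| mult: "x \<in> alg_gen iota S \<Longrightarrow> y \<in> alg_gen iota S \<Longrightarrow> x * y \<in> alg_gen iota S"

definition direct_sum_decomp :: "('i \<Rightarrow> 'b::ab_group_add set) \<Rightarrow> bool" where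
  "direct_sum_decomp D \<longleftrightarrow>
     (\<forall>n. 0 \<in> D n \<and> (\<forall>x\<in>D n. \<forall>y\<in>D n. x + y \<in> D n \<and> - x \<in> D n)) \<and>
     (\<forall>x. \<exists>!c. finite {n. c n \<noteq> 0} \<and> (\<forall>n. c n \<in> D n) \<and> x = sum c {n. c n \<noteq> 0})"

(* R (the whole type 'r) is a standard graded k-algebra with structure map iota : k -> R
   and homogeneous components G n = R_n. *)
definition standard_graded_algebra ::
    "('k::field \<Rightarrow> 'r::comm_ring_1) \<Rightarrow> (nat \<Rightarrow> 'r set) \<Rightarrow> bool" where
  "standard_graded_algebra iota G \<longleftrightarrow>
     iota 1 = 1 \<and> (\<forall>x y. iota (x + y) = iota x + iota y) \<and> (\<forall>x y. iota (x * y) = iota x * iota y) \<and>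
     inj iota \<and>
     direct_sum_decomp G \<and>
     (\<forall>n c x. x \<in> G n \<longrightarrow> iota c * x \<in> G n) \<and>
     (\<forall>m n x y. x \<in> G m \<longrightarrow> y \<in> G n \<longrightarrow> x * y \<in> G (m + n)) \<and>
     G 0 = range iota \<and>
     (\<exists>B. finite B \<and> B \<subseteq> G 1 \<and> alg_gen iota B = UNIV)"

(* M (the whole type 'm) is a graded R-module via smul, with components MG n = M_n, n \<in> \<int>. *)
definition graded_module ::
    "(nat \<Rightarrow> 'r::comm_ring_1 set) \<Rightarrow> ('r \<Rightarrow> 'm::ab_group_add \<Rightarrow> 'm) \<Rightarrow> (int \<Rightarrow> 'm set) \<Rightarrow> bool" where
  "graded_module G smul MG \<longleftrightarrow>
     module smul \<and> direct_sum_decomp MG \<and>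
     (\<forall>i n r x. r \<in> G i \<longrightarrow> x \<in> MG n \<longrightarrow> smul r x \<in> MG (int i + n))"

definition fin_gen_module :: "('r::comm_ring_1 \<Rightarrow> 'm::ab_group_add \<Rightarrow> 'm) \<Rightarrow> bool" where
  "fin_gen_module smul \<longleftrightarrow> (\<exists>S. finite S \<and> module.span smul S = UNIV)"

definition R_linear :: "('r::comm_ring_1 \<Rightarrow> 'm::ab_group_add \<Rightarrow> 'm) \<Rightarrow> ('r \<Rightarrow> 'n::ab_group_add \<Rightarrow> 'n)
    \<Rightarrow> ('m \<Rightarrow> 'n) \<Rightarrow> bool" where
  "R_linear smul1 smul2 f \<longleftrightarrow> (\<forall>x y. f (x + y) = f x + f y) \<and> (\<forall>r x. f (smul1 r x) = smul2 r (f x))"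

definition graded_rank :: "('k::field \<Rightarrow> 'r::comm_ring_1) \<Rightarrow> ('r \<Rightarrow> 'm::ab_group_add \<Rightarrow> 'm)
    \<Rightarrow> (int \<Rightarrow> 'm set) \<Rightarrow> int \<Rightarrow> nat" where
  "graded_rank iota smul MG n = vector_space.dim (\<lambda>c x. smul (iota c) x) (MG n)"

definition hilbert_series :: "('k::field \<Rightarrow> 'r::comm_ring_1) \<Rightarrow> ('r \<Rightarrow> 'm::ab_group_add \<Rightarrow> 'm)
    \<Rightarrow> (int \<Rightarrow> 'm set) \<Rightarrow> int fls" where
  "hilbert_series iota smul MG = Abs_fls (\<lambda>n. int (graded_rank iota smul MG n))"

(* R regarded as a graded module over itself (nonzero components only in degrees \<ge> 0). *)
definition int_grading :: "(nat \<Rightarrow> 'r::zero set) \<Rightarrow> int \<Rightarrow> 'r set" where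
  "int_grading G n = (if n \<ge> 0 then G (nat n) else {0})"

definition exact_zero_divisor_pair :: "'r::comm_ring_1 \<Rightarrow> 'r \<Rightarrow> bool" where
  "exact_zero_divisor_pair a b \<longleftrightarrow>
     a \<noteq> 0 \<and> b \<noteq> 0 \<and> \<not> a dvd 1 \<and> \<not> b dvd 1 \<and>
     {r. a * r = 0} = range (\<lambda>r. b * r) \<and> {r. b * r = 0} = range (\<lambda>r. a * r)"

end

theory Submission
  imports Defs "HOL-Library.List_Lexorder"
begin

text \<open>In each degree \<open>n\<close>, the maps \<open>\<pi>\<close>, multiplication by \<open>a\<close> and \<open>\<psi>\<close> give exact
  sequences of \<open>k\<close>-vector spaces \<open>0 \<rightarrow> aM\<^sub>n\<^sub>-\<^sub>1 \<rightarrow> M\<^sub>n \<rightarrow> Q\<^sub>n \<rightarrow> 0\<close> and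
  \<open>0 \<rightarrow> Q\<^sub>n\<^sub>-\<^sub>2 \<rightarrow> M\<^sub>n\<^sub>-\<^sub>1 \<rightarrow> aM\<^sub>n\<^sub>-\<^sub>1 \<rightarrow> 0\<close>, so rank-nullity gives
  \<open>m\<^sub>n - m\<^sub>n\<^sub>-\<^sub>1 = q\<^sub>n - q\<^sub>n\<^sub>-\<^sub>2\<close>; as \<open>M\<^sub>n = 0\<close> for \<open>n \<ll> 0\<close> this telescopes to
  \<open>H\<^sub>M = (1 + t) H\<^sub>Q\<close>. For an exact pair \<open>(a, b)\<close> the map \<open>\<pi> x \<mapsto> b x\<close> is an isomorphism
  \<open>(R/aR)(-1) \<cong> (0 : a)\<close>, so this applies to \<open>M = R\<close>.

  Moreover \<open>H\<^sub>R\<^sub>/\<^sub>a\<^sub>R(t) (1 - t)\<^sup>d\<close> is a polynomial, \<open>d\<close> the number of generators of degree one: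
  the images of the monomials that are not combinations of lexicographically smaller
  ones form a basis of each graded piece, the exponent vectors of the other monomials
  form a monoid ideal, and by Dickson's lemma the generating function of the
  complement of a monoid ideal in \<open>\<nat>\<^sup>d\<close> is a polynomial divided by \<open>(1 - t)\<^sup>d\<close>. Hence
  \<open>H\<^sub>R(t) (1 - t)\<^sup>d\<close> is \<open>1 + t\<close> times a polynomial and vanishes at \<open>t = -1\<close>.\<close>

section \<open>Direct sum decompositions\<close>

lemma direct_sum_decomp_zero: "direct_sum_decomp D \<Longrightarrow> 0 \<in> D n"
  unfolding direct_sum_decomp_def by auto

lemma direct_sum_decomp_add: "direct_sum_decomp D \<Longrightarrow> x \<in> D n \<Longrightarrow> y \<in> D n \<Longrightarrow> x + y \<in> D n"
  unfolding direct_sum_decomp_def by auto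

lemma direct_sum_decomp_uminus: "direct_sum_decomp D \<Longrightarrow> x \<in> D n \<Longrightarrow> - x \<in> D n"
  unfolding direct_sum_decomp_def by auto

lemma direct_sum_decomp_sum:
  "direct_sum_decomp D \<Longrightarrow> (\<And>i. i \<in> A \<Longrightarrow> f i \<in> D n) \<Longrightarrow> sum f A \<in> D n"
  by (induction A rule: infinite_finite_induct) (auto intro: direct_sum_decomp_zero direct_sum_decomp_add)

lemma direct_sum_decomp_components:
  assumes "direct_sum_decomp D"
  obtains c A where "finite A" "\<And>j. c j \<in> D j" "x = sum c A"
  using assms unfolding direct_sum_decomp_def by blast

lemma direct_sum_decomp_components_unique:
  assumes D: "direct_sum_decomp D" and A: "finite A" and A': "finite A'"
    and c: "\<And>j. c j \<in> D j" and c': "\<And>j. c' j \<in> D j"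
    and cA: "\<And>j. j \<notin> A \<Longrightarrow> c j = 0" and cA': "\<And>j. j \<notin> A' \<Longrightarrow> c' j = 0"
    and eq: "sum c A = sum c' A'"
  shows "c = c'"
proof -
  let ?P = "\<lambda>c1. finite {n. c1 n \<noteq> 0} \<and> (\<forall>n. c1 n \<in> D n) \<and> sum c A = sum c1 {n. c1 n \<noteq> 0}"
  have ex1: "\<exists>!c1. ?P c1" using D unfolding direct_sum_decomp_def by blast
  have s1: "{n. c n \<noteq> 0} \<subseteq> A" using cA by auto
  have s2: "{n. c' n \<noteq> 0} \<subseteq> A'" using cA' by auto
  have "sum c A = sum c {n. c n \<noteq> 0}"
    by (rule sum.mono_neutral_right[OF A s1]) auto
  moreover have "sum c' A' = sum c' {n. c' n \<noteq> 0}"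
    by (rule sum.mono_neutral_right[OF A' s2]) auto
  ultimately have "?P c" "?P c'"
    using c c' eq finite_subset[OF s1 A] finite_subset[OF s2 A'] by auto
  with ex1 show ?thesis by blast
qed

lemma direct_sum_decomp_homogeneous:
  assumes D: "direct_sum_decomp D" and A: "finite A" and c: "\<And>j. j \<in> A \<Longrightarrow> c j \<in> D j"
    and x: "x \<in> D n" and eq: "x = sum c A"
  shows "n \<in> A \<Longrightarrow> c n = x" "n \<notin> A \<Longrightarrow> x = 0"
proof -
  let ?c1 = "\<lambda>j. if j \<in> A then c j else 0"
  let ?c2 = "\<lambda>j. if j = n then x else 0"
  have "?c1 = ?c2"
    by (rule direct_sum_decomp_components_unique[OF D A, of "{n}"])
      (use x eq in \<open>auto simp: c direct_sum_decomp_zero[OF D]\<close>)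
  then have "?c1 n = ?c2 n" by (rule fun_cong)
  then show "n \<in> A \<Longrightarrow> c n = x" "n \<notin> A \<Longrightarrow> x = 0" by auto
qed

lemma direct_sum_decomp_disjoint:
  assumes D: "direct_sum_decomp D" and "x \<in> D n" "x \<in> D m" "n \<noteq> m"
  shows "x = 0"
  using direct_sum_decomp_homogeneous(2)[OF D, of "{m}" "\<lambda>_. x" x n] assms by auto

text \<open>Map the homogeneous components of an arbitrary preimage and compare degrees.\<close>

lemma direct_sum_decomp_range_Int_component:
  fixes f :: "'a::ab_group_add \<Rightarrow> 'b::ab_group_add" and D1 :: "int \<Rightarrow> 'a set"
  assumes D1: "direct_sum_decomp D1" and D2: "direct_sum_decomp D2"
    and add: "\<And>x y. f (x + y) = f x + f y" and graded: "\<And>j. f ` D1 j \<subseteq> D2 (j + s)"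
  shows "range f \<inter> D2 n = f ` D1 (n - s)"
proof
  have "f ` D1 (n - s) \<subseteq> D2 n" using graded[of "n - s"] by simp
  then show "f ` D1 (n - s) \<subseteq> range f \<inter> D2 n" by auto
  show "range f \<inter> D2 n \<subseteq> f ` D1 (n - s)"
  proof
    fix q assume "q \<in> range f \<inter> D2 n"
    then obtain x where q: "q \<in> D2 n" "q = f x" by auto
    have f0: "f 0 = 0" using add[of 0 0] by simp
    obtain c A where cA: "finite A" "\<And>j. c j \<in> D1 j" "x = sum c A"
      using direct_sum_decomp_components[OF D1, of x] by blast
    define c' where "c' i = f (c (i - s))" for i
    have "q = (\<Sum>j\<in>A. f (c j))"
      using q(2) cA(3) sum_comp_morphism[of f, OF f0 add, of c A] by (simp add: comp_def)
    also have "\<dots> = sum c' ((\<lambda>j. j + s) ` A)"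
      by (subst sum.reindex) (auto simp: inj_on_def c'_def)
    finally have qs: "q = sum c' ((\<lambda>j. j + s) ` A)" .
    have c'D: "c' i \<in> D2 i" for i using graded[of "i - s"] cA(2)[of "i - s"] by (auto simp: c'_def)
    show "q \<in> f ` D1 (n - s)"
    proof (cases "n \<in> (\<lambda>j. j + s) ` A")
      case True
      then have "c' n = q" using direct_sum_decomp_homogeneous(1)[OF D2 _ _ q(1) qs] cA(1) c'D by auto
      then show ?thesis using cA(2) by (auto simp: c'_def)
    next
      case False
      then have "q = 0" using direct_sum_decomp_homogeneous(2)[OF D2 _ _ q(1) qs] cA(1) c'D by auto
      then show ?thesis using direct_sum_decomp_zero[OF D1] f0 by auto
    qed
  qed
qed

lemma sum_nonneg_support_int:
  fixes c :: "int \<Rightarrow> 'a::comm_monoid_add"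
  assumes neg: "\<And>n. n < 0 \<Longrightarrow> c n = 0"
  shows "{n. c n \<noteq> 0} = int ` {j. c (int j) \<noteq> 0}"
    and "sum c {n. c n \<noteq> 0} = (\<Sum>j | c (int j) \<noteq> 0. c (int j))"
proof -
  show s: "{n. c n \<noteq> 0} = int ` {j. c (int j) \<noteq> 0}"
  proof (intro set_eqI iffI)
    fix n assume "n \<in> {n. c n \<noteq> 0}"
    then have "n \<ge> 0" "c n \<noteq> 0" using neg by (auto simp: not_less[symmetric])
    then show "n \<in> int ` {j. c (int j) \<noteq> 0}" by (auto intro!: image_eqI[of _ _ "nat n"])
  qed auto
  show "sum c {n. c n \<noteq> 0} = (\<Sum>j | c (int j) \<noteq> 0. c (int j))"
    unfolding s by (simp add: sum.reindex)
qed

lemma int_grading_components_exist: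
  assumes D: "direct_sum_decomp G"
  shows "\<exists>c. finite {n. c n \<noteq> 0} \<and> (\<forall>n. c n \<in> int_grading G n) \<and> x = sum c {n. c n \<noteq> 0}"
proof -
  obtain c A where cA: "finite A" "\<And>j. c j \<in> G j" "x = sum c A"
    using direct_sum_decomp_components[OF D, of x] by blast
  define c' where "c' n = (if 0 \<le> n \<and> nat n \<in> A then c (nat n) else 0)" for n
  have neg: "n < 0 \<Longrightarrow> c' n = 0" for n by (simp add: c'_def)
  have c'_int: "c' (int j) = (if j \<in> A then c j else 0)" for j by (simp add: c'_def)
  have "finite {j. c' (int j) \<noteq> 0}"
    using cA(1) by (rule finite_subset[rotated]) (auto simp: c'_int split: if_splits)
  then have fin: "finite {n. c' n \<noteq> 0}" using sum_nonneg_support_int(1)[of c', OF neg] by simp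
  have "sum c' {n. c' n \<noteq> 0} = (\<Sum>j | c' (int j) \<noteq> 0. c' (int j))"
    by (rule sum_nonneg_support_int(2)[of c', OF neg])
  also have "\<dots> = (\<Sum>j\<in>A. c' (int j))"
    by (rule sum.mono_neutral_left[OF cA(1)]) (auto simp: c'_int split: if_splits)
  also have "\<dots> = x" using cA(3) by (simp add: c'_int)
  moreover have "c' n \<in> int_grading G n" for n
    using cA(2) D by (auto simp: c'_def int_grading_def direct_sum_decomp_zero)
  ultimately show ?thesis using fin by metis
qed

lemma int_grading_components_unique:
  assumes D: "direct_sum_decomp G"
    and c1: "finite {n. c1 n \<noteq> 0}" "\<forall>n. c1 n \<in> int_grading G n"
    and c2: "finite {n. c2 n \<noteq> 0}" "\<forall>n. c2 n \<in> int_grading G n"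
    and eq: "sum c1 {n. c1 n \<noteq> 0} = sum c2 {n. c2 n \<noteq> 0}"
  shows "c1 = c2"
proof -
  have neg: "n < 0 \<Longrightarrow> c1 n = 0" "n < 0 \<Longrightarrow> c2 n = 0" for n
    using c1(2) c2(2) by (auto simp: int_grading_def dest!: spec[of _ n])
  have fin: "finite {j. c1 (int j) \<noteq> 0}" "finite {j. c2 (int j) \<noteq> 0}"
    using c1(1) c2(1) sum_nonneg_support_int(1)[of c1] sum_nonneg_support_int(1)[of c2] neg
    by (auto dest: finite_imageD simp: inj_on_def)
  have "(\<lambda>j. c1 (int j)) = (\<lambda>j. c2 (int j))"
  proof (rule direct_sum_decomp_components_unique[OF D fin])
    show "c1 (int j) \<in> G j" "c2 (int j) \<in> G j" for j
      using c1(2) c2(2) by (auto simp: int_grading_def dest!: spec[of _ "int j"])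
    show "(\<Sum>j | c1 (int j) \<noteq> 0. c1 (int j)) = (\<Sum>j | c2 (int j) \<noteq> 0. c2 (int j))"
      using eq sum_nonneg_support_int(2)[of c1] sum_nonneg_support_int(2)[of c2] neg by metis
  qed auto
  then have "c1 n = c2 n" for n
    by (cases "n < 0") (auto simp: neg dest: fun_cong[of _ _ "nat n"])
  then show ?thesis by auto
qed

lemma direct_sum_decomp_int_grading:
  assumes D: "direct_sum_decomp G"
  shows "direct_sum_decomp (int_grading G)"
  unfolding direct_sum_decomp_def
proof (intro conjI allI ex_ex1I)
  show "0 \<in> int_grading G n" for n
    using D by (simp add: int_grading_def direct_sum_decomp_zero)
  show "\<forall>x\<in>int_grading G n. \<forall>y\<in>int_grading G n. x + y \<in> int_grading G n \<and> - x \<in> int_grading G n"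
    for n using D by (auto simp: int_grading_def direct_sum_decomp_add direct_sum_decomp_uminus)
  show "\<exists>c. finite {n. c n \<noteq> 0} \<and> (\<forall>n. c n \<in> int_grading G n) \<and> x = sum c {n. c n \<noteq> 0}" for x
    by (rule int_grading_components_exist[OF D])
  show "c1 = c2" if "finite {n. c1 n \<noteq> 0} \<and> (\<forall>n. c1 n \<in> int_grading G n) \<and> x = sum c1 {n. c1 n \<noteq> 0}"
    and "finite {n. c2 n \<noteq> 0} \<and> (\<forall>n. c2 n \<in> int_grading G n) \<and> x = sum c2 {n. c2 n \<noteq> 0}"
    for x c1 c2
    using that by (intro int_grading_components_unique[OF D]) auto
qed

section \<open>Linear algebra\<close>

lemma (in vector_space) span_Int_span_eq_zero_if_independent_Un:
  assumes "independent (A \<union> B)" "A \<inter> B = {}" "finite A" "finite B"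
    and "x \<in> span A" "x \<in> span B"
  shows "x = 0"
proof -
  obtain r where r: "x = (\<Sum>v\<in>A. scale (r v) v)" using assms(3,5) span_finite by auto
  obtain t where t: "x = (\<Sum>v\<in>B. scale (t v) v)" using assms(4,6) span_finite by auto
  define g where "g v = (if v \<in> A then r v else - t v)" for v
  have "(\<Sum>v\<in>A \<union> B. scale (g v) v) = (\<Sum>v\<in>A. scale (g v) v) + (\<Sum>v\<in>B. scale (g v) v)"
    using assms(2-4) by (simp add: sum.union_disjoint)
  also have "(\<Sum>v\<in>A. scale (g v) v) = x" using r by (simp add: g_def)
  also have "(\<Sum>v\<in>B. scale (g v) v) = - x" using t assms(2)
    by (auto simp: g_def sum_negf[symmetric] intro!: sum.cong)
  finally have "(\<Sum>v\<in>A \<union> B. scale (g v) v) = 0" by simp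
  then have "\<forall>v\<in>A. g v = 0"
    using independentD[OF assms(1), of "A \<union> B" g] assms(3,4) by auto
  then show ?thesis using r by (simp add: g_def)
qed

lemma (in vector_space) dim_zero_space: "dim {0} = 0"
proof -
  have "dim {0} = dim {}" by (rule span_eq_dim) simp
  then show ?thesis using dim_eq_card_independent[of "{}"] independent_empty by simp
qed

text \<open>If a basis \<open>B\<close> of \<open>V\<close> extends a basis \<open>BK\<close> of the kernel of \<open>f\<close> on \<open>V\<close>, then \<open>f\<close>
  maps the new vectors \<open>B - BK\<close> injectively onto a basis of \<open>f ` V\<close>.\<close>

lemma (in Vector_Spaces.linear) dim_image_eq_card_basis_diff_kernel_basis:
  assumes sub: "vs1.subspace V" and B: "B \<subseteq> V" "vs1.independent B" "V \<subseteq> vs1.span B" "finite B"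
    and BK: "BK \<subseteq> B" "BK \<subseteq> {x\<in>V. f x = 0}" "{x\<in>V. f x = 0} \<subseteq> vs1.span BK"
  shows "vs2.dim (f ` V) = card (B - BK)"
proof -
  let ?C = "B - BK"
  have span_C: "vs1.span ?C \<subseteq> V" using B(1) sub by (intro vs1.span_minimal) auto
  have inj: "inj_on f (vs1.span ?C)"
    unfolding inj_on_iff_eq_0[OF vs1.subspace_span]
  proof (intro ballI impI)
    fix x assume x: "x \<in> vs1.span ?C" "f x = 0"
    then have "x \<in> vs1.span BK" using span_C BK(3) by auto
    moreover have "BK \<union> ?C = B" using BK(1) by auto
    ultimately show "x = 0"
      using vs1.span_Int_span_eq_zero_if_independent_Un[of BK ?C x] x B(2,4) finite_subset[OF BK(1)]
      by auto
  qed
  have indep_fC: "vs2.independent (f ` ?C)"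
    using independent_injective_image[OF _ inj] B(2) vs1.independent_mono[of B ?C] by auto
  have "f ` V \<subseteq> f ` vs1.span B" using B(3) by auto
  also have "\<dots> = vs2.span (f ` B)" by (simp add: span_image)
  also have "\<dots> \<subseteq> vs2.span (f ` ?C)"
  proof (rule vs2.span_minimal)
    show "f ` B \<subseteq> vs2.span (f ` ?C)"
    proof
      fix y assume "y \<in> f ` B"
      then obtain v where "v \<in> B" "y = f v" by auto
      then show "y \<in> vs2.span (f ` ?C)"
        using BK B(1) vs2.span_zero vs2.span_base by (cases "v \<in> BK") auto
    qed
  qed simp
  finally have "f ` V \<subseteq> vs2.span (f ` ?C)" .
  moreover have "f ` ?C \<subseteq> f ` V" using B(1) by auto
  ultimately have "vs2.dim (f ` V) = card (f ` ?C)"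
    using vs2.basis_card_eq_dim[OF _ _ indep_fC] by simp
  also have "\<dots> = card ?C"
    using inj vs1.span_superset by (intro card_image) (rule inj_on_subset)
  finally show ?thesis .
qed

lemma (in Vector_Spaces.linear) dim_subspace_eq_dim_kernel_plus_dim_image:
  assumes sub: "vs1.subspace V" and V_span: "V \<subseteq> vs1.span W" and W: "finite W"
  shows "vs1.dim V = vs1.dim {x\<in>V. f x = 0} + vs2.dim (f ` V)"
proof -
  let ?K = "{x\<in>V. f x = 0}"
  obtain BK where BK: "BK \<subseteq> ?K" "vs1.independent BK" "?K \<subseteq> vs1.span BK"
    using vs1.maximal_independent_subset by blast
  obtain B where B: "BK \<subseteq> B" "B \<subseteq> V" "vs1.independent B" "V \<subseteq> vs1.span B"
    using vs1.maximal_independent_subset_extend[of BK V] BK by auto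
  have finB: "finite B" using vs1.independent_span_bound[OF W B(3)] B(2) V_span by auto
  have "vs1.dim V = card B" using vs1.basis_card_eq_dim[OF B(2,4,3)] by simp
  moreover have "vs1.dim ?K = card BK" using vs1.basis_card_eq_dim[OF BK(1,3,2)] by simp
  moreover have "vs2.dim (f ` V) = card (B - BK)"
    by (rule dim_image_eq_card_basis_diff_kernel_basis[OF sub B(2-4) finB B(1) BK(1,3)])
  moreover have "card B = card BK + card (B - BK)"
    using card_Diff_subset[OF finite_subset[OF B(1) finB] B(1)] card_mono[OF finB B(1)] by simp
  ultimately show ?thesis by simp
qed

lemma module_hom_if_R_linear:
  "module s1 \<Longrightarrow> module s2 \<Longrightarrow> R_linear s1 s2 f \<Longrightarrow> module_hom s1 s2 f"
  by (simp add: module_hom_iff R_linear_def)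

lemma R_linear_smul: "module smul \<Longrightarrow> R_linear smul smul (smul r)"
  unfolding R_linear_def by (simp add: module.scale_right_distrib module.scale_scale mult.commute)

lemma module_mult: "module ((*) :: 'a::comm_ring_1 \<Rightarrow> 'a \<Rightarrow> 'a)"
  by unfold_locales (auto simp: algebra_simps)

lemma span_mult_one: "module.span ((*) :: 'a::comm_ring_1 \<Rightarrow> 'a \<Rightarrow> 'a) {1} = UNIV"
proof -
  interpret module "(*) :: 'a \<Rightarrow> 'a \<Rightarrow> 'a" by (rule module_mult)
  have "x * 1 \<in> span {1}" for x :: 'a by (intro span_scale span_base) simp
  then show ?thesis by auto
qed

lemma fin_gen_module_mult: "fin_gen_module ((*) :: 'a::comm_ring_1 \<Rightarrow> 'a \<Rightarrow> 'a)"
  unfolding fin_gen_module_def using span_mult_one by blast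

lemma fin_gen_module_surj_image:
  assumes "fin_gen_module s1" "module s1" "module s2" "R_linear s1 s2 f" "surj f"
  shows "fin_gen_module s2"
proof -
  interpret module_hom s1 s2 f using assms(2-4) by (rule module_hom_if_R_linear)
  obtain S where "finite S" "m1.span S = UNIV"
    using assms(1) unfolding fin_gen_module_def by blast
  then have "finite (f ` S)" "m2.span (f ` S) = UNIV"
    using assms(5) by (simp_all add: span_image)
  then show ?thesis unfolding fin_gen_module_def by blast
qed

context vector_space
begin

lemma span_image_eq_span_unreduced:
  fixes e :: "'i::linorder \<Rightarrow> 'b"
  assumes S: "finite S"
  shows "span (e ` S) = span (e ` {u \<in> S. e u \<notin> span (e ` {v \<in> S. v < u})})"
    (is "_ = span (e ` ?U)")
proof -
  have "e u \<in> span (e ` ?U)" if "u \<in> S" for u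
    using that
  proof (induction u rule: measure_induct_rule[of "\<lambda>u. card {v \<in> S. v < u}"])
    case (less u)
    show ?case
    proof (cases "u \<in> ?U")
      case True then show ?thesis by (auto intro: span_base)
    next
      case False
      have "e ` {v \<in> S. v < u} \<subseteq> span (e ` ?U)"
      proof
        fix z assume "z \<in> e ` {v \<in> S. v < u}"
        then obtain v where v: "v \<in> S" "v < u" "z = e v" by auto
        have "{w \<in> S. w < v} \<subset> {w \<in> S. w < u}" using v by auto
        then have "card {w \<in> S. w < v} < card {w \<in> S. w < u}"
          using S by (intro psubset_card_mono) auto
        then show "z \<in> span (e ` ?U)" using less.IH v by blast
      qed
      then have "span (e ` {v \<in> S. v < u}) \<subseteq> span (e ` ?U)" by (simp add: span_minimal)
      then show ?thesis using False less.prems by auto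
    qed
  qed
  then have "span (e ` S) \<subseteq> span (e ` ?U)" by (intro span_minimal) auto
  moreover have "span (e ` ?U) \<subseteq> span (e ` S)" by (intro span_mono) auto
  ultimately show ?thesis by blast
qed

lemma independent_image_unreduced:
  fixes e :: "'i::linorder \<Rightarrow> 'b"
  assumes S: "finite S"
  shows "independent (e ` {u \<in> S. e u \<notin> span (e ` {v \<in> S. v < u})})" (is "independent (e ` ?U)")
proof -
  have "A \<subseteq> ?U \<longrightarrow> independent (e ` A)" if "finite A" for A
    using that
  proof (induction A rule: finite_linorder_max_induct)
    case (insert b A)
    show ?case
    proof
      assume sub: "insert b A \<subseteq> ?U"
      then have "e ` A \<subseteq> e ` {v \<in> S. v < b}" using insert.hyps by auto
      then have "e b \<notin> span (e ` A)" using sub span_mono by blast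
      then show "independent (e ` insert b A)"
        using insert.IH sub independent_insertI by auto
    qed
  qed (simp add: independent_empty)
  then show ?thesis using S by simp
qed

lemma inj_on_unreduced:
  fixes e :: "'i::linorder \<Rightarrow> 'b"
  shows "inj_on e {u \<in> S. e u \<notin> span (e ` {v \<in> S. v < u})}" (is "inj_on e ?U")
proof (rule inj_onI)
  have earlier: "e u \<noteq> e v" if "u \<in> S" "v \<in> ?U" "u < v" for u v
  proof
    assume "e u = e v"
    have "u \<in> {w \<in> S. w < v}" using that(1,3) by simp
    then have "e v \<in> span (e ` {w \<in> S. w < v})"
      unfolding \<open>e u = e v\<close>[symmetric] by (intro span_base imageI)
    then show False using that(2) by simp
  qed
  fix u v assume uv: "u \<in> ?U" "v \<in> ?U" "e u = e v"
  show "u = v"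
  proof (rule linorder_cases[of u v])
    assume "u < v" then show ?thesis using earlier[of u v] uv by simp
  next
    assume "v < u" then show ?thesis using earlier[of v u] uv by simp
  qed
qed

lemma dim_span_image_eq_card_unreduced:
  fixes e :: "'i::linorder \<Rightarrow> 'b"
  assumes "finite S"
  shows "dim (span (e ` S)) = card {u \<in> S. e u \<notin> span (e ` {v \<in> S. v < u})}"
    (is "_ = card ?U")
proof -
  have "dim (span (e ` S)) = dim (span (e ` ?U))"
    by (simp only: span_image_eq_span_unreduced[OF assms])
  also have "\<dots> = card (e ` ?U)"
    by (rule dim_span_eq_card_independent[OF independent_image_unreduced[OF assms]])
  also have "\<dots> = card ?U" by (rule card_image[OF inj_on_unreduced])
  finally show ?thesis .
qed

end

section \<open>Exact pairs of zero divisors\<close>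

text \<open>For an exact pair \<open>(a, b)\<close> and the quotient map \<open>\<pi> : R \<rightarrow> R/aR\<close>, the map
  \<open>\<pi> x \<mapsto> b x\<close> is well defined because \<open>ab = 0\<close>, injective because \<open>(0 : b) = aR\<close>, and
  has image \<open>bR = (0 : a)\<close>.\<close>

lemma exact_zero_divisor_pair_mult_eq_if_residue_eq:
  fixes \<pi> :: "'r::comm_ring_1 \<Rightarrow> 'q::ab_group_add"
  assumes ez: "exact_zero_divisor_pair a b" and \<pi>: "R_linear (*) smulQ \<pi>" "{x. \<pi> x = 0} = range ((*) a)"
    and eq: "\<pi> x = \<pi> y"
  shows "b * x = b * y"
proof -
  have "{r. a * r = 0} = range ((*) b)" using ez unfolding exact_zero_divisor_pair_def by auto
  then have "a * b = 0" by (metis (mono_tags, lifting) mem_Collect_eq mult_1_right rangeI)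
  have "\<pi> (x - y + y) = \<pi> (x - y) + \<pi> y" using \<pi>(1) unfolding R_linear_def by blast
  then have "\<pi> (x - y) = 0" using eq by simp
  then obtain r where "x - y = a * r" using \<pi>(2) by auto
  then have "b * (x - y) = (a * b) * r" by (simp add: algebra_simps)
  then show ?thesis using \<open>a * b = 0\<close> by (simp add: algebra_simps)
qed

lemma exact_zero_divisor_pair_annihilator_iso:
  fixes \<pi> :: "'r::comm_ring_1 \<Rightarrow> 'q::ab_group_add"
  assumes ez: "exact_zero_divisor_pair a b"
    and \<pi>: "R_linear (*) smulQ \<pi>" "surj \<pi>" "{x. \<pi> x = 0} = range ((*) a)"
  defines "\<psi> \<equiv> \<lambda>q. b * (SOME x. \<pi> x = q)"
  shows "R_linear smulQ (*) \<psi>" "inj \<psi>" "range \<psi> = {x. a * x = 0}" "\<And>x. \<psi> (\<pi> x) = b * x"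
proof -
  have ann_a: "{r. a * r = 0} = range ((*) b)" and ann_b: "{r. b * r = 0} = range ((*) a)"
    using ez unfolding exact_zero_divisor_pair_def by auto
  have \<pi>_add: "\<pi> (x + y) = \<pi> x + \<pi> y" and \<pi>_mult: "\<pi> (r * x) = smulQ r (\<pi> x)" for x y r
    using \<pi>(1) unfolding R_linear_def by blast+
  note well_defined = exact_zero_divisor_pair_mult_eq_if_residue_eq[OF ez \<pi>(1,3)]
  define sel where "sel q = (SOME x. \<pi> x = q)" for q
  have \<pi>_sel: "\<pi> (sel q) = q" for q unfolding sel_def using \<pi>(2) by (metis (mono_tags) someI_ex surjD)
  have \<psi>_sel: "\<psi> q = b * sel q" for q by (simp add: \<psi>_def sel_def)
  show \<psi>_\<pi>: "\<psi> (\<pi> x) = b * x" for x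
    unfolding \<psi>_sel by (rule well_defined) (simp add: \<pi>_sel)
  show "R_linear smulQ (*) \<psi>"
    unfolding R_linear_def
  proof (intro conjI allI)
    fix x y
    have "b * sel (x + y) = b * (sel x + sel y)" by (rule well_defined) (simp add: \<pi>_sel \<pi>_add)
    then show "\<psi> (x + y) = \<psi> x + \<psi> y" unfolding \<psi>_sel by (simp add: distrib_left)
  next
    fix r x
    have "b * sel (smulQ r x) = b * (r * sel x)" by (rule well_defined) (simp add: \<pi>_sel \<pi>_mult)
    then show "\<psi> (smulQ r x) = r * \<psi> x" unfolding \<psi>_sel by (simp add: algebra_simps)
  qed
  show "inj \<psi>"
  proof (rule injI)
    fix x y assume "\<psi> x = \<psi> y"
    then have "b * (sel x - sel y) = 0" by (simp add: \<psi>_sel algebra_simps)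
    then obtain r where "sel x - sel y = a * r" using ann_b by blast
    then have "sel x = sel y + a * r" by (simp add: algebra_simps)
    moreover have "\<pi> (a * r) = 0" using \<pi>(3) by (metis (mono_tags) mem_Collect_eq rangeI)
    ultimately have "\<pi> (sel x) = \<pi> (sel y)" by (simp add: \<pi>_add)
    then show "x = y" by (simp add: \<pi>_sel)
  qed
  show "range \<psi> = {x. a * x = 0}"
  proof (intro set_eqI iffI)
    fix x assume "x \<in> range \<psi>"
    then show "x \<in> {x. a * x = 0}" using ann_a by (auto simp: \<psi>_sel mult.assoc[symmetric])
  next
    fix x assume "x \<in> {x. a * x = 0}"
    then obtain r where "x = b * r" using ann_a by blast
    then show "x \<in> range \<psi>" using \<psi>_\<pi> by (metis rangeI)
  qed
qed

section \<open>Dickson's lemma and monoid ideals of exponent vectors\<close>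

lemma nat_seq_monotone_subseq:
  fixes s :: "nat \<Rightarrow> nat"
  obtains g :: "nat \<Rightarrow> nat" where "strict_mono g" "\<And>i j. i \<le> j \<Longrightarrow> s (g i) \<le> s (g j)"
proof -
  obtain f where f: "strict_mono f" "monoseq (\<lambda>n. s (f n))" using seq_monosub by blast
  show ?thesis
  proof (cases "\<forall>m n. m \<le> n \<longrightarrow> s (f m) \<le> s (f n)")
    case True then show ?thesis using f(1) that by blast
  next
    case False
    then have dec: "\<forall>m n. m \<le> n \<longrightarrow> s (f n) \<le> s (f m)" using f(2) unfolding monoseq_def by blast
    define m where "m = (LEAST v. v \<in> range (\<lambda>n. s (f n)))"
    have "m \<in> range (\<lambda>n. s (f n))" unfolding m_def by (rule LeastI_ex) blast
    then obtain i0 where i0: "s (f i0) = m" by auto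
    have "m \<le> s (f n)" for n unfolding m_def by (rule Least_le) blast
    then have const: "s (f (i + i0)) = m" for i
      using dec[rule_format, of i0 "i + i0"] i0 by (metis le_add2 le_antisym)
    have "strict_mono (\<lambda>i. f (i + i0))" using f(1) by (auto simp: strict_mono_def)
    then show ?thesis using const that[of "\<lambda>i. f (i + i0)"] by simp
  qed
qed

lemma dickson:
  fixes f :: "nat \<Rightarrow> nat list"
  assumes "\<And>i. length (f i) = k"
  obtains g :: "nat \<Rightarrow> nat" where "strict_mono g" "\<And>i j. i \<le> j \<Longrightarrow> list_all2 (\<le>) (f (g i)) (f (g j))"
  using assms
proof (induction k arbitrary: f thesis)
  case 0
  then show ?case by (metis list_all2_Nil length_0_conv strict_mono_id id_apply)
next
  case (Suc k)
  have f_Cons: "f i = hd (f i) # tl (f i)" for i using Suc.prems(2)[of i] by (cases "f i") auto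
  obtain g1 :: "nat \<Rightarrow> nat" where g1: "strict_mono g1"
    "\<And>i j. i \<le> j \<Longrightarrow> list_all2 (\<le>) (tl (f (g1 i))) (tl (f (g1 j)))"
    using Suc.IH[of "\<lambda>i. tl (f i)"] Suc.prems(2) by (auto simp del: list_all2_Cons)
  obtain g2 :: "nat \<Rightarrow> nat" where g2: "strict_mono g2"
    "\<And>i j. i \<le> j \<Longrightarrow> hd (f (g1 (g2 i))) \<le> hd (f (g1 (g2 j)))"
    using nat_seq_monotone_subseq[of "\<lambda>i. hd (f (g1 i))"] by blast
  have "strict_mono (g1 \<circ> g2)" using g1(1) g2(1) by (simp add: strict_mono_def)
  moreover have "list_all2 (\<le>) (f ((g1 \<circ> g2) i)) (f ((g1 \<circ> g2) j))" if "i \<le> j" for i j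
  proof -
    have "g2 i \<le> g2 j" using g2(1) that by (simp add: strict_mono_less_eq)
    then show ?thesis using g1(2) g2(2)[OF that] f_Cons[of "g1 (g2 i)"] f_Cons[of "g1 (g2 j)"]
      by (metis comp_apply list_all2_Cons)
  qed
  ultimately show ?case by (rule Suc.prems(1))
qed

definition upward_closed :: "nat \<Rightarrow> nat list set \<Rightarrow> bool" where
  "upward_closed k N \<longleftrightarrow>
     (\<forall>u\<in>N. length u = k) \<and> (\<forall>u\<in>N. \<forall>w. length w = k \<longrightarrow> map2 (+) u w \<in> N)"

lemma upward_closed_mono:
  assumes N: "upward_closed k N" and u: "u \<in> N" and uv: "list_all2 (\<le>) u v"
  shows "v \<in> N"
proof -
  have "v = map2 (+) u (map2 (-) v u)"
    using uv by (induction rule: list_all2_induct) auto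
  moreover have "length (map2 (-) v u) = k"
    using N u list_all2_lengthD[OF uv] unfolding upward_closed_def by simp
  ultimately show ?thesis using N u unfolding upward_closed_def by metis
qed

text \<open>The ascending chain condition for monoid ideals: a strictly increasing chain would
  yield new elements \<open>u\<^sub>0, u\<^sub>1, \<dots>\<close>, two of which are comparable by Dickson's lemma.\<close>

lemma upward_closed_chain_stabilizes:
  fixes N :: "nat \<Rightarrow> nat list set"
  assumes up: "\<And>j. upward_closed k (N j)" and mono: "\<And>i j. i \<le> j \<Longrightarrow> N i \<subseteq> N j"
  obtains J where "\<And>j. j \<ge> J \<Longrightarrow> N j = N J"
proof (rule ccontr)
  assume "\<not> thesis"
  then have ex: "\<forall>J. \<exists>j\<ge>J. N j \<noteq> N J" using that by blast
  define next_change where "next_change J = (SOME j. j \<ge> J \<and> N j \<noteq> N J)" for J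
  have next_change: "next_change J \<ge> J" "N (next_change J) \<noteq> N J" for J
    using someI_ex[OF ex[rule_format, of J]] by (auto simp: next_change_def)
  define idx where "idx i = (next_change ^^ i) 0" for i
  have idx_Suc: "idx (Suc i) = next_change (idx i)" for i by (simp add: idx_def)
  have "mono idx" unfolding mono_iff_le_Suc using next_change(1) idx_Suc by auto
  have "N (idx i) \<subset> N (idx (Suc i))" for i
    using next_change(2)[of "idx i"] mono[OF next_change(1)[of "idx i"]] unfolding idx_Suc by blast
  then have "\<forall>i. \<exists>u. u \<in> N (idx (Suc i)) - N (idx i)" by blast
  then obtain u where u: "\<And>i. u i \<in> N (idx (Suc i)) - N (idx i)" by metis
  have "length (u i) = k" for i using u[of i] up[of "idx (Suc i)"] unfolding upward_closed_def by blast
  then obtain g :: "nat \<Rightarrow> nat" where g: "strict_mono g"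
    "\<And>i j. i \<le> j \<Longrightarrow> list_all2 (\<le>) (u (g i)) (u (g j))"
    using dickson[of u k] by blast
  have "g 0 < g 1" using g(1) by (simp add: strict_mono_def)
  then have "idx (Suc (g 0)) \<le> idx (g 1)" using \<open>mono idx\<close> by (simp add: monoD)
  then have "u (g 0) \<in> N (idx (g 1))" using u[of "g 0"] mono by blast
  then have "u (g 1) \<in> N (idx (g 1))" by (rule upward_closed_mono[OF up]) (use g(2)[of 0 1] in simp)
  then show False using u[of "g 1"] by simp
qed

lemma sum_list_map2_plus:
  "length u = length w \<Longrightarrow> sum_list (map2 (+) u w) = sum_list u + sum_list (w :: nat list)"
proof (induction u arbitrary: w)
  case (Cons a u)
  then show ?case by (cases w) auto
qed simp

lemma map2_plus_less_map2_plus: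
  "length u = length w \<Longrightarrow> length v = length w \<Longrightarrow> u < v \<Longrightarrow> map2 (+) u w < map2 (+) v (w :: nat list)"
proof (induction w arbitrary: u v)
  case (Cons x w)
  then obtain a u' b v' where "u = a # u'" "v = b # v'" by (auto simp: length_Suc_conv)
  with Cons show ?case by auto
qed simp

section \<open>Power series\<close>

text \<open>If \<open>m n - m (n - 1) = q n - q (n - 2)\<close>, then \<open>m n - q n - q (n - 1)\<close> does not
  depend on \<open>n\<close>; it vanishes for \<open>n \<ll> 0\<close>, hence everywhere.\<close>

lemma Abs_fls_eq_one_plus_X_times_if_recurrence:
  fixes m q :: "int \<Rightarrow> int"
  assumes m0: "\<And>n. n < n0 \<Longrightarrow> m n = 0" and q0: "\<And>n. n < n0 \<Longrightarrow> q n = 0"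
    and rec: "\<And>n. m n = m (n - 1) - q (n - 2) + q n"
  shows "Abs_fls m = (1 + fls_X) * Abs_fls q"
proof (rule fls_eqI)
  fix n
  have telescoped: "m n = q n + q (n - 1)"
  proof (cases "n < n0")
    case True then show ?thesis using m0 q0 by simp
  next
    case False
    then have "n0 - 1 \<le> n" by simp
    then show ?thesis
    proof (induction n rule: int_ge_induct)
      case base then show ?case using m0 q0 by simp
    next
      case (step i) then show ?case using rec[of "i + 1"] by simp
    qed
  qed
  have "fls_nth (Abs_fls m) k = m k" for k by (rule nth_Abs_fls_lower_bound[of n0]) (simp add: m0)
  moreover have "fls_nth (Abs_fls q) k = q k" for k by (rule nth_Abs_fls_lower_bound[of n0]) (simp add: q0)
  ultimately show "fls_nth (Abs_fls m) n = fls_nth ((1 + fls_X) * Abs_fls q) n"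
    using telescoped by (simp add: distrib_right fls_X_times_conv_shift(1))
qed

definition poly_over_one_minus_X_pow :: "nat \<Rightarrow> int fps \<Rightarrow> bool" where
  "poly_over_one_minus_X_pow k F \<longleftrightarrow> (\<exists>p. F * (1 - fps_X) ^ k = fps_of_poly p)"

lemma fps_of_poly_one_minus_X: "fps_of_poly [:1, -1:] = (1 - fps_X :: int fps)"
  by (rule fps_ext) (auto simp: coeff_pCons split: nat.splits)

lemma poly_over_one_minus_X_pow_Suc:
  assumes "poly_over_one_minus_X_pow k F" shows "poly_over_one_minus_X_pow (Suc k) F"
proof -
  obtain p where p: "F * (1 - fps_X) ^ k = fps_of_poly p"
    using assms by (auto simp: poly_over_one_minus_X_pow_def)
  have "F * (1 - fps_X) ^ Suc k = (F * (1 - fps_X) ^ k) * (1 - fps_X)"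
    by (simp add: power_Suc2 mult.assoc)
  also have "\<dots> = fps_of_poly (p * [:1, -1:])"
    by (simp add: p fps_of_poly_mult fps_of_poly_one_minus_X)
  finally show ?thesis by (auto simp: poly_over_one_minus_X_pow_def)
qed

lemma poly_over_one_minus_X_pow_add:
  "poly_over_one_minus_X_pow k F \<Longrightarrow> poly_over_one_minus_X_pow k H \<Longrightarrow>
    poly_over_one_minus_X_pow k (F + H)"
  unfolding poly_over_one_minus_X_pow_def by (auto simp: distrib_right fps_of_poly_add[symmetric])

lemma poly_over_one_minus_X_pow_sum:
  "(\<And>j. j \<in> A \<Longrightarrow> poly_over_one_minus_X_pow k (F j)) \<Longrightarrow> poly_over_one_minus_X_pow k (\<Sum>j\<in>A. F j)"
proof (induction A rule: infinite_finite_induct)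
  case (insert a A) then show ?case by (simp add: poly_over_one_minus_X_pow_add)
qed (auto simp: poly_over_one_minus_X_pow_def intro: exI[of _ 0])

lemma poly_over_one_minus_X_pow_X_power_mult:
  assumes "poly_over_one_minus_X_pow k F" shows "poly_over_one_minus_X_pow k (fps_X ^ j * F)"
proof -
  obtain p where p: "F * (1 - fps_X) ^ k = fps_of_poly p"
    using assms by (auto simp: poly_over_one_minus_X_pow_def)
  have "fps_X ^ j * F * (1 - fps_X) ^ k = fps_of_poly (monom 1 j * p)"
    by (simp add: fps_of_poly_mult fps_of_poly_monom mult.assoc flip: p)
  then show ?thesis by (auto simp: poly_over_one_minus_X_pow_def)
qed

lemma poly_over_one_minus_X_pow_mult_geometric:
  assumes "poly_over_one_minus_X_pow k F"
  shows "poly_over_one_minus_X_pow (Suc k) (F * Abs_fps (\<lambda>_. 1))"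
proof -
  obtain p where p: "F * (1 - fps_X) ^ k = fps_of_poly p"
    using assms by (auto simp: poly_over_one_minus_X_pow_def)
  have geometric: "Abs_fps (\<lambda>_. 1) * (1 - fps_X) = (1 :: int fps)"
    using fps_right_inverse[of "Abs_fps (\<lambda>_. 1) :: int fps" 1] fps_lr_inverse_gp_ring1'(2)[where 'a=int] by simp
  have "F * Abs_fps (\<lambda>_. 1) * (1 - fps_X) ^ Suc k = F * (1 - fps_X) ^ k * (Abs_fps (\<lambda>_. 1) * (1 - fps_X))"
    by (simp add: algebra_simps)
  then show ?thesis by (auto simp: geometric p poly_over_one_minus_X_pow_def)
qed

lemma fps_convolution_eventually_constant:
  fixes h :: "nat \<Rightarrow> nat \<Rightarrow> int"
  assumes hJ: "\<And>j. j \<ge> J \<Longrightarrow> h j = h J"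
  shows "Abs_fps (\<lambda>n. \<Sum>j\<le>n. h j (n - j))
    = (\<Sum>j<J. fps_X ^ j * Abs_fps (h j)) + fps_X ^ J * (Abs_fps (h J) * Abs_fps (\<lambda>_. 1))"
proof (rule fps_ext)
  fix n
  have head: "(\<Sum>j<J. fps_X ^ j * Abs_fps (h j)) $ n = (\<Sum>j\<in>{..<J} \<inter> {..n}. h j (n - j))"
    by (simp add: fps_sum_nth fps_X_power_mult_nth sum.If_cases Int_def not_less)
  have "(Abs_fps (h J) * Abs_fps (\<lambda>_. 1)) $ m = (\<Sum>i=0..m. h J i)" for m
    by (simp add: fps_mult_nth)
  then have tail: "(fps_X ^ J * (Abs_fps (h J) * Abs_fps (\<lambda>_. 1))) $ n
      = (if n < J then 0 else (\<Sum>i=0..n-J. h J i))"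
    by (simp only: fps_X_power_mult_nth)
  show "Abs_fps (\<lambda>n. \<Sum>j\<le>n. h j (n - j)) $ n
      = ((\<Sum>j<J. fps_X ^ j * Abs_fps (h j)) + fps_X ^ J * (Abs_fps (h J) * Abs_fps (\<lambda>_. 1))) $ n"
  proof (cases "n < J")
    case True
    then have "{..<J} \<inter> {..n} = {..n}" by auto
    then show ?thesis using head tail True by simp
  next
    case False
    have "{..n} = ({..<J} \<inter> {..n}) \<union> {J..n}" using False by auto
    then have "(\<Sum>j\<le>n. h j (n - j)) = (\<Sum>j\<in>({..<J} \<inter> {..n}) \<union> {J..n}. h j (n - j))"
      by (rule sum.cong) simp
    also have "\<dots> = (\<Sum>j\<in>{..<J} \<inter> {..n}. h j (n - j)) + (\<Sum>j\<in>{J..n}. h j (n - j))"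
      by (rule sum.union_disjoint) auto
    also have "(\<Sum>j\<in>{J..n}. h j (n - j)) = (\<Sum>j\<in>{J..n}. h J (n - j))"
      by (intro sum.cong refl) (metis atLeastAtMost_iff hJ)
    also have "\<dots> = (\<Sum>i=0..n-J. h J i)"
      by (rule sum.reindex_bij_witness[of _ "\<lambda>i. n - i" "\<lambda>j. n - j"]) (use False in auto)
    finally show ?thesis using head tail False by simp
  qed
qed

section \<open>Counting exponent vectors outside a monoid ideal\<close>

definition exps :: "nat \<Rightarrow> nat \<Rightarrow> nat list set" where
  "exps k n = {u. length u = k \<and> sum_list u = n}"

lemma finite_exps: "finite (exps k n)"
proof -
  have "exps k n \<subseteq> {u. set u \<subseteq> {0..n} \<and> length u = k}"
    by (auto simp: exps_def dest: member_le_sum_list)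
  then show ?thesis by (rule finite_subset) (rule finite_lists_length_eq, simp)
qed

lemma exps_Suc_diff_eq_UN:
  "exps (Suc k) n - N = (\<Union>j\<in>{..n}. (Cons j) ` (exps k (n - j) - {u. j # u \<in> N}))"
proof (intro set_eqI iffI)
  fix u assume u: "u \<in> exps (Suc k) n - N"
  then obtain j t where "u = j # t" by (cases u) (auto simp: exps_def)
  then show "u \<in> (\<Union>j\<in>{..n}. (Cons j) ` (exps k (n - j) - {u. j # u \<in> N}))"
    using u by (auto simp: exps_def intro!: bexI[of _ j] image_eqI[of _ _ t])
qed (auto simp: exps_def)

lemma card_exps_Suc_diff:
  "card (exps (Suc k) n - N) = (\<Sum>j\<le>n. card (exps k (n - j) - {u. j # u \<in> N}))"
  unfolding exps_Suc_diff_eq_UN by (subst card_UN_disjoint) (auto simp: card_image finite_exps)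

lemma upward_closed_Cons_slice:
  assumes N: "upward_closed (Suc k) N"
  shows "upward_closed k {u. j # u \<in> N}" and "{u. j # u \<in> N} \<subseteq> {u. Suc j # u \<in> N}"
proof -
  show "upward_closed k {u. j # u \<in> N}"
    unfolding upward_closed_def
  proof (intro conjI ballI allI impI)
    fix u w :: "nat list" assume "u \<in> {u. j # u \<in> N}" "length w = k"
    moreover have "length (0 # w) = Suc k" using \<open>length w = k\<close> by simp
    ultimately have "map2 (+) (j # u) (0 # w) \<in> N" using N unfolding upward_closed_def by blast
    then show "map2 (+) u w \<in> {u. j # u \<in> N}" by simp
  qed (use N in \<open>auto simp: upward_closed_def\<close>)
  show "{u. j # u \<in> N} \<subseteq> {u. Suc j # u \<in> N}"
  proof
    fix u assume "u \<in> {u. j # u \<in> N}"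
    then have u: "j # u \<in> N" "length u = k" using N by (auto simp: upward_closed_def)
    moreover have "length (1 # replicate k 0) = Suc k" by simp
    ultimately have "map2 (+) (j # u) (1 # replicate k 0) \<in> N" using N unfolding upward_closed_def by blast
    moreover have "map2 (+) u (replicate (length u) 0) = u" by (induction u) auto
    ultimately show "u \<in> {u. Suc j # u \<in> N}" using u(2) by simp
  qed
qed

text \<open>Induction on \<open>k\<close>: slicing by the first coordinate writes the series as a convolution
  with the series of the slices, which are upward closed and increase with the first
  coordinate, hence are eventually constant.\<close>

lemma poly_over_one_minus_X_pow_card_exps_diff:
  assumes "upward_closed k N"
  shows "poly_over_one_minus_X_pow k (Abs_fps (\<lambda>n. int (card (exps k n - N))))"
  using assms
proof (induction k arbitrary: N)
  case 0
  define c where "c = (if [] \<in> N then 0 else 1::int)"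
  have "Abs_fps (\<lambda>n. int (card (exps 0 n - N))) = fps_const c"
  proof (rule fps_ext)
    fix n
    have "exps 0 n = (if n = 0 then {[]} else {})" by (auto simp: exps_def)
    then show "Abs_fps (\<lambda>n. int (card (exps 0 n - N))) $ n = fps_const c $ n"
      by (auto simp: c_def insert_Diff_if)
  qed
  then show ?case unfolding poly_over_one_minus_X_pow_def by (intro exI[of _ "[:c:]"]) simp
next
  case (Suc k)
  define h where "h j m = int (card (exps k m - {u. j # u \<in> N}))" for j m
  have mono: "{u. i # u \<in> N} \<subseteq> {u. j # u \<in> N}" if "i \<le> j" for i j
    by (rule lift_Suc_mono_le[of "\<lambda>j. {u. j # u \<in> N}", OF upward_closed_Cons_slice(2)[OF Suc.prems] that])
  obtain J where J: "\<And>j. j \<ge> J \<Longrightarrow> {u. j # u \<in> N} = {u. J # u \<in> N}"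
    using upward_closed_chain_stabilizes[of k "\<lambda>j. {u. j # u \<in> N}",
          OF upward_closed_Cons_slice(1)[OF Suc.prems] mono] by blast
  have hJ: "h j = h J" if "j \<ge> J" for j using J[OF that] by (simp add: h_def fun_eq_iff)
  have IH: "poly_over_one_minus_X_pow k (Abs_fps (h j))" for j
    unfolding h_def by (rule Suc.IH[OF upward_closed_Cons_slice(1)[OF Suc.prems]])
  have "Abs_fps (\<lambda>n. int (card (exps (Suc k) n - N))) = Abs_fps (\<lambda>n. \<Sum>j\<le>n. h j (n - j))"
    by (simp add: card_exps_Suc_diff h_def)
  also have "\<dots> = (\<Sum>j<J. fps_X ^ j * Abs_fps (h j)) + fps_X ^ J * (Abs_fps (h J) * Abs_fps (\<lambda>_. 1))"
    by (rule fps_convolution_eventually_constant[of J h, OF hJ])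
  finally show ?case
    by (simp only:) (intro poly_over_one_minus_X_pow_add poly_over_one_minus_X_pow_sum
        poly_over_one_minus_X_pow_X_power_mult poly_over_one_minus_X_pow_Suc
        poly_over_one_minus_X_pow_mult_geometric IH)
qed

section \<open>Standard graded algebras\<close>

locale standard_graded_gens =
  fixes iota :: "'k::field \<Rightarrow> 'r::comm_ring_1" and G :: "nat \<Rightarrow> 'r set" and xs :: "'r list"
  assumes standard_graded: "standard_graded_algebra iota G"
    and gens_degree_one: "set xs \<subseteq> G 1" and gens_generate: "alg_gen iota (set xs) = UNIV"
begin

lemma iota_one [simp]: "iota 1 = 1"
  and iota_add [simp]: "iota (x + y) = iota x + iota y"
  and iota_mult [simp]: "iota (x * y) = iota x * iota y"
  and direct_sum_decomp_G: "direct_sum_decomp G"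
  and G_mult: "r \<in> G m \<Longrightarrow> s \<in> G n \<Longrightarrow> r * s \<in> G (m + n)"
  and G_zero_eq: "G 0 = range iota"
  using standard_graded unfolding standard_graded_algebra_def by auto

lemma one_in_G_zero: "1 \<in> G 0"
  using G_zero_eq iota_one by (metis rangeI)

abbreviation nvars :: nat where "nvars \<equiv> length xs"

definition monomial :: "nat list \<Rightarrow> 'r" where
  "monomial u = (\<Prod>i<nvars. xs ! i ^ (u ! i))"

definition unit_exp :: "nat \<Rightarrow> nat list" where
  "unit_exp i = (replicate nvars 0)[i := 1]"

lemma length_unit_exp [simp]: "length (unit_exp i) = nvars"
  by (simp add: unit_exp_def)

lemma monomial_zero: "monomial (replicate nvars 0) = 1"
  by (simp add: monomial_def)

lemma monomial_unit_exp: "i < nvars \<Longrightarrow> monomial (unit_exp i) = xs ! i"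
proof -
  assume i: "i < nvars"
  have "monomial (unit_exp i) = (\<Prod>j\<in>{i}. xs ! j ^ (unit_exp i ! j))"
    unfolding monomial_def by (rule prod.mono_neutral_right) (use i in \<open>auto simp: unit_exp_def\<close>)
  then show ?thesis using i by (simp add: unit_exp_def)
qed

lemma monomial_add:
  "length u = nvars \<Longrightarrow> length w = nvars \<Longrightarrow> monomial (map2 (+) u w) = monomial u * monomial w"
  unfolding monomial_def by (simp add: power_add prod.distrib)

lemma prod_in_G: "(\<And>i. i \<in> A \<Longrightarrow> f i \<in> G (g i)) \<Longrightarrow> prod f A \<in> G (sum g A)"
proof (induction A rule: infinite_finite_induct)
  case (insert a A)
  then show ?case using G_mult[of "f a" "g a" "prod f A" "sum g A"] by simp
qed (auto simp: one_in_G_zero)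

lemma monomial_in_G: assumes "u \<in> exps nvars n" shows "monomial u \<in> G n"
proof -
  have power_in_G: "x \<in> G 1 \<Longrightarrow> x ^ k \<in> G k" for x k
  proof (induction k)
    case (Suc k) then show ?case using G_mult[of x 1 "x ^ k" k] by simp
  qed (simp add: one_in_G_zero)
  have "monomial u \<in> G (\<Sum>i<nvars. u ! i)"
    unfolding monomial_def using gens_degree_one
    by (intro prod_in_G power_in_G) (auto simp: subset_iff)
  then show ?thesis using assms by (auto simp: exps_def sum_list_sum_nth atLeast0LessThan)
qed

abbreviation kscale :: "('r \<Rightarrow> 'm::ab_group_add \<Rightarrow> 'm) \<Rightarrow> 'k \<Rightarrow> 'm \<Rightarrow> 'm" where
  "kscale smul \<equiv> \<lambda>c x. smul (iota c) x"

lemma vector_space_kscale: "module smul \<Longrightarrow> vector_space (kscale smul)"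
  unfolding module_def vector_space_def by (simp add: distrib_right)

lemma linear_kscale_if_R_linear:
  assumes "module s1" "module s2" "R_linear s1 s2 f"
  shows "Vector_Spaces.linear (kscale s1) (kscale s2) f"
  using assms vector_space_kscale[OF assms(1)] vector_space_kscale[OF assms(2)]
  unfolding module_hom_iff_linear[symmetric] module_hom_iff module_iff_vector_space R_linear_def
  by simp

section \<open>Graded modules are spanned by monomial multiples of homogeneous generators\<close>

definition monomial_multiples :: "('r \<Rightarrow> 'm::ab_group_add \<Rightarrow> 'm) \<Rightarrow> 'm set \<Rightarrow> 'm set" where
  "monomial_multiples smul T = {smul (monomial u) m | u m. length u = nvars \<and> m \<in> T}"

lemma smul_gen_kspan_monomial_multiples:
  fixes smul :: "'r \<Rightarrow> 'm::ab_group_add \<Rightarrow> 'm"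
  assumes M: "module smul" and i: "i < nvars"
    and v: "v \<in> module.span (kscale smul) (monomial_multiples smul T)"
  shows "smul (xs ! i) v \<in> module.span (kscale smul) (monomial_multiples smul T)"
proof -
  interpret M: module smul by fact
  interpret V: vector_space "kscale smul" using vector_space_kscale[OF M] .
  let ?Z = "monomial_multiples smul T"
  interpret H: Vector_Spaces.linear "kscale smul" "kscale smul" "smul (xs ! i)"
    by (rule linear_kscale_if_R_linear[OF M M R_linear_smul[OF M]])
  have "smul (xs ! i) ` ?Z \<subseteq> ?Z"
  proof
    fix z assume "z \<in> smul (xs ! i) ` ?Z"
    then obtain u m where z: "z = smul (xs ! i) (smul (monomial u) m)" "length u = nvars" "m \<in> T"
      by (auto simp: monomial_multiples_def)
    then have "z = smul (monomial (map2 (+) u (unit_exp i))) m"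
      using i by (simp add: M.scale_scale monomial_add monomial_unit_exp mult.commute)
    then show "z \<in> ?Z" using z(2,3) unfolding monomial_multiples_def by force
  qed
  then have "V.span (smul (xs ! i) ` ?Z) \<subseteq> V.span ?Z" by (rule V.span_mono)
  then show ?thesis using v by (auto simp: H.span_image)
qed

lemma kspan_monomial_multiples_smul_closed:
  fixes smul :: "'r \<Rightarrow> 'm::ab_group_add \<Rightarrow> 'm"
  assumes M: "module smul" and v: "v \<in> module.span (kscale smul) (monomial_multiples smul T)"
  shows "smul r v \<in> module.span (kscale smul) (monomial_multiples smul T)"
proof -
  interpret M: module smul by fact
  interpret V: vector_space "kscale smul" using vector_space_kscale[OF M] .
  have "r \<in> alg_gen iota (set xs)" using gens_generate by simp
  then show ?thesis using v
  proof (induction r arbitrary: v rule: alg_gen.induct)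
    case (const c) then show ?case by (rule V.span_scale)
  next
    case (gen s)
    then show ?case using smul_gen_kspan_monomial_multiples[OF M] by (auto simp: in_set_conv_nth)
  next
    case (add x y)
    then have "smul x v + smul y v \<in> V.span (monomial_multiples smul T)" by (simp add: V.span_add)
    then show ?case by (simp add: M.scale_left_distrib)
  next
    case (mult x y)
    then have "smul x (smul y v) \<in> V.span (monomial_multiples smul T)" by blast
    then show ?case by (simp add: M.scale_scale)
  qed
qed

lemma kspan_monomial_multiples_eq_UNIV:
  fixes smul :: "'r \<Rightarrow> 'm::ab_group_add \<Rightarrow> 'm"
  assumes M: "module smul" and T: "module.span smul T = UNIV"
  shows "module.span (kscale smul) (monomial_multiples smul T) = UNIV"
proof -
  interpret M: module smul by fact
  interpret V: vector_space "kscale smul" using vector_space_kscale[OF M] .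
  let ?S = "V.span (monomial_multiples smul T)"
  have "M.subspace ?S"
    unfolding M.subspace_def
    using kspan_monomial_multiples_smul_closed[OF M] by (auto simp: V.span_zero V.span_add)
  moreover have "T \<subseteq> ?S"
  proof
    fix m assume "m \<in> T"
    then have "smul (monomial (replicate nvars 0)) m \<in> monomial_multiples smul T"
      unfolding monomial_multiples_def by force
    then show "m \<in> ?S" by (auto simp: monomial_zero intro: V.span_base)
  qed
  ultimately have "M.span T \<subseteq> ?S" by (rule M.span_minimal[rotated])
  then show ?thesis using T by auto
qed

lemma graded_moduleD:
  assumes "graded_module G smul MG"
  shows "module smul" "direct_sum_decomp MG"
    "\<And>r x i n. r \<in> G i \<Longrightarrow> x \<in> MG n \<Longrightarrow> smul r x \<in> MG (int i + n)"
    "\<And>c x n. x \<in> MG n \<Longrightarrow> smul (iota c) x \<in> MG n"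
  using assms G_zero_eq unfolding graded_module_def by (auto, metis add_0 of_nat_0 rangeI)

lemma graded_module_int_grading: "graded_module G (*) (int_grading G)"
  unfolding graded_module_def
proof (intro conjI allI impI)
  show "module ((*) :: 'r \<Rightarrow> 'r \<Rightarrow> 'r)" by (rule module_mult)
  show "direct_sum_decomp (int_grading G)" by (rule direct_sum_decomp_int_grading[OF direct_sum_decomp_G])
  fix i n r x assume r: "r \<in> G i" and x: "x \<in> int_grading G n"
  show "r * x \<in> int_grading G (int i + n)"
  proof (cases "n \<ge> 0")
    case True
    then have "r * x \<in> G (i + nat n)" using G_mult[OF r] x by (simp add: int_grading_def)
    then show ?thesis using True by (simp add: int_grading_def nat_add_distrib)
  next
    case False
    then show ?thesis using x direct_sum_decomp_zero[OF direct_sum_decomp_G]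
      by (simp add: int_grading_def)
  qed
qed
lemma subspace_graded_component:
  assumes "graded_module G smul MG" shows "module.subspace (kscale smul) (MG n)"
proof -
  note M = graded_moduleD[OF assms]
  interpret V: vector_space "kscale smul" using vector_space_kscale[OF M(1)] .
  show ?thesis unfolding V.subspace_def
    using M by (auto intro: direct_sum_decomp_zero direct_sum_decomp_add)
qed

lemma kspan_Int_graded_component:
  fixes smul :: "'r \<Rightarrow> 'm::ab_group_add \<Rightarrow> 'm" and MG :: "int \<Rightarrow> 'm set"
  assumes gm: "graded_module G smul MG" and Z: "\<And>z. z \<in> Z \<Longrightarrow> \<exists>j. z \<in> MG j"
    and x: "x \<in> MG n" "x \<in> module.span (kscale smul) Z"
  shows "x \<in> module.span (kscale smul) (Z \<inter> MG n)"
proof -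
  note M = graded_moduleD[OF gm]
  interpret V: vector_space "kscale smul" using vector_space_kscale[OF M(1)] .
  obtain t r where t: "finite t" "t \<subseteq> Z" "x = (\<Sum>a\<in>t. smul (iota (r a)) a)"
    using x(2) unfolding V.span_explicit by blast
  define deg where "deg a = (SOME j. a \<in> MG j)" for a
  have deg: "a \<in> MG (deg a)" if "a \<in> Z" for a
    unfolding deg_def using Z[OF that] by (rule someI_ex)
  define c where "c j = (\<Sum>a\<in>{a\<in>t. deg a = j}. smul (iota (r a)) a)" for j
  have x_sum: "x = sum c (deg ` t)" unfolding c_def t(3) by (rule sum.image_gen[OF t(1)])
  have c_in: "c j \<in> MG j" for j
    unfolding c_def by (rule direct_sum_decomp_sum[OF M(2)]) (use deg t(2) M(4) in auto)
  have c_span: "c n \<in> V.span (Z \<inter> MG n)"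
    unfolding c_def by (intro V.span_sum V.span_scale[of _ _ c' for c', simplified] V.span_base)
       (use deg t(2) in auto)
  show ?thesis
  proof (cases "n \<in> deg ` t")
    case True
    then show ?thesis using direct_sum_decomp_homogeneous(1)[OF M(2) _ _ x(1) x_sum] t(1) c_in c_span
      by auto
  next
    case False
    then show ?thesis using direct_sum_decomp_homogeneous(2)[OF M(2) _ _ x(1) x_sum] t(1) c_in V.span_zero
      by auto
  qed
qed

definition degree_monomial_multiples ::
    "('r \<Rightarrow> 'm::ab_group_add \<Rightarrow> 'm) \<Rightarrow> (int \<times> 'm) set \<Rightarrow> int \<Rightarrow> 'm set" where
  "degree_monomial_multiples smul T n =
     {smul (monomial u) m | u m j. (j, m) \<in> T \<and> j \<le> n \<and> u \<in> exps nvars (nat (n - j))}"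

lemma finite_degree_monomial_multiples:
  assumes "finite T" shows "finite (degree_monomial_multiples smul T n)"
proof -
  have "degree_monomial_multiples smul T n
      \<subseteq> (\<lambda>(p, u). smul (monomial u) (snd p)) ` (SIGMA p:T. exps nvars (nat (n - fst p)))"
    unfolding degree_monomial_multiples_def by (auto simp: image_iff) force
  then show ?thesis by (rule finite_subset) (auto intro!: finite_SigmaI assms finite_exps)
qed

text \<open>The pairs \<open>(j, m) \<in> T\<close> are homogeneous generators \<open>m\<close> of degree \<open>j\<close>.\<close>

lemma graded_component_subset_kspan:
  fixes smul :: "'r \<Rightarrow> 'm::ab_group_add \<Rightarrow> 'm" and MG :: "int \<Rightarrow> 'm set"
  assumes gm: "graded_module G smul MG" and T_deg: "\<And>j m. (j, m) \<in> T \<Longrightarrow> m \<in> MG j"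
    and T_span: "module.span smul (snd ` T) = UNIV"
  shows "MG n \<subseteq> module.span (kscale smul) (degree_monomial_multiples smul T n)"
proof
  note M = graded_moduleD[OF gm]
  interpret V: vector_space "kscale smul" using vector_space_kscale[OF M(1)] .
  let ?Z = "monomial_multiples smul (snd ` T)"
  have Z_deg: "smul (monomial u) m \<in> MG (int (sum_list u) + j)" if "(j, m) \<in> T" "length u = nvars"
    for u m j
    using M(3)[OF monomial_in_G T_deg[OF that(1)]] that(2) by (simp add: exps_def)
  fix x assume x: "x \<in> MG n"
  have "x \<in> V.span (?Z \<inter> MG n)"
  proof (rule kspan_Int_graded_component[OF gm _ x])
    show "x \<in> V.span ?Z" by (simp add: kspan_monomial_multiples_eq_UNIV[OF M(1) T_span])
    show "\<exists>j. z \<in> MG j" if "z \<in> ?Z" for z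
      using that Z_deg unfolding monomial_multiples_def by force
  qed
  moreover have "?Z \<inter> MG n \<subseteq> insert 0 (degree_monomial_multiples smul T n)"
  proof
    fix z assume z: "z \<in> ?Z \<inter> MG n"
    then obtain u m j where um: "z = smul (monomial u) m" "length u = nvars" "(j, m) \<in> T"
      unfolding monomial_multiples_def by auto
    show "z \<in> insert 0 (degree_monomial_multiples smul T n)"
    proof (cases "int (sum_list u) + j = n")
      case True
      then show ?thesis using um unfolding degree_monomial_multiples_def exps_def by force
    next
      case False
      then show ?thesis
        using direct_sum_decomp_disjoint[OF M(2), of z n] z Z_deg[OF um(3,2)] um(1) by auto
    qed
  qed
  then have "V.span (?Z \<inter> MG n) \<subseteq> V.span (degree_monomial_multiples smul T n)"
    by (metis V.span_insert_0 V.span_mono)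
  ultimately show "x \<in> V.span (degree_monomial_multiples smul T n)" by auto
qed

lemma obtain_homogeneous_generators:
  fixes smul :: "'r \<Rightarrow> 'm::ab_group_add \<Rightarrow> 'm"
  assumes gm: "graded_module G smul MG" and fg: "fin_gen_module smul"
  obtains T where "finite T" "\<And>j m. (j, m) \<in> T \<Longrightarrow> m \<in> MG j" "module.span smul (snd ` T) = UNIV"
proof -
  note M = graded_moduleD[OF gm]
  interpret M: module smul by (rule M(1))
  obtain S where S: "finite S" "M.span S = UNIV" using fg unfolding fin_gen_module_def by blast
  have "\<forall>s. \<exists>c A. finite A \<and> (\<forall>j. c j \<in> MG j) \<and> s = sum c A"
    using direct_sum_decomp_components[OF M(2)] by metis
  then obtain c A where cA: "\<And>s. finite (A s)" "\<And>s j. c s j \<in> MG j" "\<And>s. s = sum (c s) (A s)"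
    by metis
  define T where "T = (\<Union>s\<in>S. (\<lambda>j. (j, c s j)) ` A s)"
  have "S \<subseteq> M.span (snd ` T)"
  proof
    fix s assume s: "s \<in> S"
    have "sum (c s) (A s) \<in> M.span (snd ` T)"
      by (intro M.span_sum M.span_base) (use s in \<open>force simp: T_def\<close>)
    then show "s \<in> M.span (snd ` T)" using cA(3)[of s] by simp
  qed
  then have "M.span (snd ` T) = UNIV" using S(2) M.span_minimal[of S] by auto
  moreover have "finite T" using S(1) cA(1) by (auto simp: T_def)
  moreover have "m \<in> MG j" if "(j, m) \<in> T" for j m using that cA(2) by (auto simp: T_def)
  ultimately show ?thesis using that by blast
qed

lemma graded_component_finite_kspan:
  fixes smul :: "'r \<Rightarrow> 'm::ab_group_add \<Rightarrow> 'm"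
  assumes "graded_module G smul MG" "fin_gen_module smul"
  obtains W where "finite W" "MG n \<subseteq> module.span (kscale smul) W"
  using obtain_homogeneous_generators[OF assms] graded_component_subset_kspan[OF assms(1)]
    finite_degree_monomial_multiples by metis

lemma graded_component_vanishes_below:
  fixes smul :: "'r \<Rightarrow> 'm::ab_group_add \<Rightarrow> 'm"
  assumes gm: "graded_module G smul MG" and fg: "fin_gen_module smul"
  obtains n0 where "\<And>n. n < n0 \<Longrightarrow> MG n = {0}"
proof -
  obtain T where T: "finite T" "\<And>j m. (j, m) \<in> T \<Longrightarrow> m \<in> MG j" "module.span smul (snd ` T) = UNIV"
    using obtain_homogeneous_generators[OF gm fg] by blast
  define n0 where "n0 = (if T = {} then 0 else Min (fst ` T))"
  have "MG n = {0}" if "n < n0" for n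
  proof -
    have "j \<ge> n0" if "(j, m) \<in> T" for j m
      using that T(1) by (auto simp: n0_def intro!: Min_le image_eqI[of j fst "(j, m)"])
    then have "degree_monomial_multiples smul T n = {}"
      using \<open>n < n0\<close> unfolding degree_monomial_multiples_def by force
    interpret V: vector_space "kscale smul"
      using vector_space_kscale[OF graded_moduleD(1)[OF gm]] .
    show ?thesis
      using \<open>degree_monomial_multiples smul T n = {}\<close> graded_component_subset_kspan[OF gm T(2,3), of n]
        direct_sum_decomp_zero[OF graded_moduleD(2)[OF gm]] by auto
  qed
  then show ?thesis using that by blast
qed

section \<open>Hilbert series of a module with \<open>(M/aM)(-1) \<cong> (0 :\<^sub>M a)\<close>\<close>

lemma graded_surj_component:
  assumes gm: "graded_module G smul MG" and gq: "graded_module G smulQ QG"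
    and f: "R_linear smul smulQ f" "surj f" "\<forall>n. f ` MG n \<subseteq> QG n"
  shows "f ` MG n = QG n"
proof -
  have "range f \<inter> QG n = f ` MG (n - 0)"
    using f(1,3) by (intro direct_sum_decomp_range_Int_component[OF graded_moduleD(2)[OF gm]
        graded_moduleD(2)[OF gq]]) (auto simp: R_linear_def)
  then show ?thesis using f(2) by simp
qed

lemma dim_graded_component_eq_kernel_plus_image:
  fixes smul :: "'r \<Rightarrow> 'm::ab_group_add \<Rightarrow> 'm" and smul' :: "'r \<Rightarrow> 'n::ab_group_add \<Rightarrow> 'n"
  assumes gm: "graded_module G smul MG" and fg: "fin_gen_module smul"
    and M': "module smul'" and f: "R_linear smul smul' f"
  shows "vector_space.dim (kscale smul) (MG n)
    = vector_space.dim (kscale smul) {x \<in> MG n. f x = 0} + vector_space.dim (kscale smul') (f ` MG n)"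
proof -
  interpret Vector_Spaces.linear "kscale smul" "kscale smul'" f
    by (rule linear_kscale_if_R_linear[OF graded_moduleD(1)[OF gm] M' f])
  obtain W where "finite W" "MG n \<subseteq> vs1.span W"
    using graded_component_finite_kspan[OF gm fg] by blast
  then show ?thesis
    by (intro dim_subspace_eq_dim_kernel_plus_dim_image subspace_graded_component[OF gm])
qed

text \<open>In degree \<open>n\<close>, \<open>\<pi>\<close> has kernel \<open>aM\<^sub>n\<^sub>-\<^sub>1\<close> and image \<open>Q\<^sub>n\<close>, multiplication by \<open>a\<close> on
  \<open>M\<^sub>n\<^sub>-\<^sub>1\<close> has kernel \<open>\<psi> Q\<^sub>n\<^sub>-\<^sub>2\<close> and image \<open>aM\<^sub>n\<^sub>-\<^sub>1\<close>, and \<open>\<psi>\<close> is injective.\<close>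

lemma graded_rank_recurrence:
  fixes smul :: "'r \<Rightarrow> 'm::ab_group_add \<Rightarrow> 'm" and smulQ :: "'r \<Rightarrow> 'q::ab_group_add \<Rightarrow> 'q"
  assumes a: "a \<in> G 1" and gm: "graded_module G smul MG" and fg: "fin_gen_module smul"
    and gq: "graded_module G smulQ QG"
    and \<pi>: "R_linear smul smulQ \<pi>" "surj \<pi>" "\<forall>n. \<pi> ` MG n \<subseteq> QG n" "{x. \<pi> x = 0} = range (smul a)"
    and \<psi>: "R_linear smulQ smul \<psi>" "inj \<psi>" "range \<psi> = {x. smul a x = 0}"
      "\<forall>n. \<psi> ` QG n \<subseteq> MG (n + 1)"
  shows "int (graded_rank iota smul MG n) = int (graded_rank iota smul MG (n - 1))
    - int (graded_rank iota smulQ QG (n - 2)) + int (graded_rank iota smulQ QG n)"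
proof -
  note M = graded_moduleD[OF gm] and Q = graded_moduleD[OF gq]
  interpret VM: vector_space "kscale smul" using vector_space_kscale[OF M(1)] .
  interpret VQ: vector_space "kscale smulQ" using vector_space_kscale[OF Q(1)] .
  have fgQ: "fin_gen_module smulQ" by (rule fin_gen_module_surj_image[OF fg M(1) Q(1) \<pi>(1,2)])
  have a_add: "smul a (x + y) = smul a x + smul a y" and \<psi>_add: "\<psi> (u + v) = \<psi> u + \<psi> v" for x y u v
    using R_linear_smul[OF M(1)] \<psi>(1) unfolding R_linear_def by blast+
  have \<psi>_zero: "\<psi> 0 = 0" using \<psi>_add[of 0 0] by simp
  have "{x \<in> MG n. \<pi> x = 0} = range (smul a) \<inter> MG n" using \<pi>(4) by auto
  also have "\<dots> = smul a ` MG (n - 1)"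
    by (rule direct_sum_decomp_range_Int_component[OF M(2) M(2) a_add])
      (use M(3)[OF a] in \<open>auto simp: add.commute\<close>)
  finally have ker_\<pi>: "{x \<in> MG n. \<pi> x = 0} = smul a ` MG (n - 1)" .
  have "{x \<in> MG (n - 1). smul a x = 0} = range \<psi> \<inter> MG (n - 1)" using \<psi>(3) by auto
  also have "\<dots> = \<psi> ` QG (n - 1 - 1)"
    by (rule direct_sum_decomp_range_Int_component[OF Q(2) M(2) \<psi>_add]) (use \<psi>(4) in auto)
  finally have ker_a: "{x \<in> MG (n - 1). smul a x = 0} = \<psi> ` QG (n - 2)" by simp
  have ker_\<psi>: "{x \<in> QG (n - 2). \<psi> x = 0} = {0}"
    using \<psi>(2) \<psi>_zero direct_sum_decomp_zero[OF Q(2)] by (auto simp: inj_def)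
  have "VM.dim (MG n) = VM.dim (smul a ` MG (n - 1)) + VQ.dim (QG n)"
    using dim_graded_component_eq_kernel_plus_image[OF gm fg Q(1) \<pi>(1), of n]
      ker_\<pi> graded_surj_component[OF gm gq \<pi>(1-3)] by simp
  moreover have "VM.dim (MG (n - 1)) = VM.dim (\<psi> ` QG (n - 2)) + VM.dim (smul a ` MG (n - 1))"
    using dim_graded_component_eq_kernel_plus_image[OF gm fg M(1) R_linear_smul[OF M(1), of a], of "n - 1"]
      ker_a by simp
  moreover have "VQ.dim (QG (n - 2)) = VM.dim (\<psi> ` QG (n - 2))"
    using dim_graded_component_eq_kernel_plus_image[OF gq fgQ M(1) \<psi>(1), of "n - 2"]
      ker_\<psi> VQ.dim_zero_space by simp
  ultimately show ?thesis unfolding graded_rank_def by simp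
qed

theorem hilbert_series_eq_if_annihilator_iso:
  fixes smul :: "'r \<Rightarrow> 'm::ab_group_add \<Rightarrow> 'm" and smulQ :: "'r \<Rightarrow> 'q::ab_group_add \<Rightarrow> 'q"
  assumes a: "a \<in> G 1" and gm: "graded_module G smul MG" and fg: "fin_gen_module smul"
    and gq: "graded_module G smulQ QG"
    and \<pi>: "R_linear smul smulQ \<pi>" "surj \<pi>" "\<forall>n. \<pi> ` MG n \<subseteq> QG n" "{x. \<pi> x = 0} = range (smul a)"
    and \<psi>: "R_linear smulQ smul \<psi>" "inj \<psi>" "range \<psi> = {x. smul a x = 0}"
      "\<forall>n. \<psi> ` QG n \<subseteq> MG (n + 1)"
  shows "hilbert_series iota smul MG = (1 + fls_X) * hilbert_series iota smulQ QG"
proof -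
  note M = graded_moduleD[OF gm] and Q = graded_moduleD[OF gq]
  interpret VM: vector_space "kscale smul" using vector_space_kscale[OF M(1)] .
  interpret VQ: vector_space "kscale smulQ" using vector_space_kscale[OF Q(1)] .
  interpret P: Vector_Spaces.linear "kscale smul" "kscale smulQ" \<pi>
    by (rule linear_kscale_if_R_linear[OF M(1) Q(1) \<pi>(1)])
  obtain n0 where M0: "\<And>n. n < n0 \<Longrightarrow> MG n = {0}"
    using graded_component_vanishes_below[OF gm fg] by blast
  have Q0: "QG n = {0}" if "n < n0" for n
    using graded_surj_component[OF gm gq \<pi>(1-3), of n] M0[OF that] by simp
  show ?thesis
    unfolding hilbert_series_def
  proof (rule Abs_fls_eq_one_plus_X_times_if_recurrence)
    show "int (graded_rank iota smul MG n) = 0" "int (graded_rank iota smulQ QG n) = 0" if "n < n0" for n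
      using M0[OF that] Q0[OF that] VM.dim_zero_space VQ.dim_zero_space
      by (simp_all add: graded_rank_def)
  qed (rule graded_rank_recurrence[OF assms])
qed

section \<open>Rationality of the Hilbert series of a cyclic module\<close>

definition reducible_exps :: "('r \<Rightarrow> 'q::ab_group_add \<Rightarrow> 'q) \<Rightarrow> (nat list \<Rightarrow> 'q) \<Rightarrow> nat list set" where
  "reducible_exps smulQ e = {u. length u = nvars \<and>
     e u \<in> module.span (kscale smulQ) (e ` {v \<in> exps nvars (sum_list u). v < u})}"

lemma upward_closed_reducible_exps:
  fixes smulQ :: "'r \<Rightarrow> 'q::ab_group_add \<Rightarrow> 'q"
  assumes Q: "module smulQ"
    and e: "\<And>u w. length u = nvars \<Longrightarrow> length w = nvars \<Longrightarrow> e (map2 (+) u w) = smulQ (monomial w) (e u)"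
  shows "upward_closed nvars (reducible_exps smulQ e)"
  unfolding upward_closed_def
proof (intro conjI ballI allI impI)
  interpret V: vector_space "kscale smulQ" using vector_space_kscale[OF Q] .
  fix u w :: "nat list" assume u: "u \<in> reducible_exps smulQ e" and w: "length w = nvars"
  let ?h = "smulQ (monomial w)"
  interpret H: Vector_Spaces.linear "kscale smulQ" "kscale smulQ" ?h
    by (rule linear_kscale_if_R_linear[OF Q Q R_linear_smul[OF Q]])
  have lu: "length u = nvars" and eu: "e u \<in> V.span (e ` {v \<in> exps nvars (sum_list u). v < u})"
    using u by (auto simp: reducible_exps_def)
  have "?h ` e ` {v \<in> exps nvars (sum_list u). v < u}
      \<subseteq> e ` {v \<in> exps nvars (sum_list (map2 (+) u w)). v < map2 (+) u w}"
  proof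
    fix z assume "z \<in> ?h ` e ` {v \<in> exps nvars (sum_list u). v < u}"
    then obtain v where v: "v \<in> exps nvars (sum_list u)" "v < u" "z = ?h (e v)" by auto
    have lv: "length v = nvars" using v(1) by (simp add: exps_def)
    have "z = e (map2 (+) v w)" using e[OF lv w] v(3) by simp
    moreover have "map2 (+) v w \<in> exps nvars (sum_list (map2 (+) u w))"
      using v(1) lu lv w by (simp add: exps_def sum_list_map2_plus)
    moreover have "map2 (+) v w < map2 (+) u w"
      using map2_plus_less_map2_plus[of v w u] lu lv w v(2) by simp
    ultimately show "z \<in> e ` {v \<in> exps nvars (sum_list (map2 (+) u w)). v < map2 (+) u w}" by blast
  qed
  then have "V.span (?h ` e ` {v \<in> exps nvars (sum_list u). v < u})
      \<subseteq> V.span (e ` {v \<in> exps nvars (sum_list (map2 (+) u w)). v < map2 (+) u w})"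
    by (rule V.span_mono)
  then have "?h ` V.span (e ` {v \<in> exps nvars (sum_list u). v < u})
      \<subseteq> V.span (e ` {v \<in> exps nvars (sum_list (map2 (+) u w)). v < map2 (+) u w})"
    by (simp only: H.span_image)
  then show "map2 (+) u w \<in> reducible_exps smulQ e"
    using e[OF lu w] eu lu w by (auto simp: reducible_exps_def)
qed (simp add: reducible_exps_def)

lemma dim_span_exps_eq_card_not_reducible:
  fixes smulQ :: "'r \<Rightarrow> 'q::ab_group_add \<Rightarrow> 'q"
  assumes Q: "module smulQ"
  shows "vector_space.dim (kscale smulQ) (module.span (kscale smulQ) (e ` exps nvars n))
    = card (exps nvars n - reducible_exps smulQ e)"
proof -
  interpret V: vector_space "kscale smulQ" using vector_space_kscale[OF Q] .
  have "exps nvars n - reducible_exps smulQ e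
      = {u \<in> exps nvars n. e u \<notin> V.span (e ` {v \<in> exps nvars n. v < u})}"
    by (auto simp: exps_def reducible_exps_def)
  then show ?thesis using V.dim_span_image_eq_card_unreduced[OF finite_exps] by simp
qed

lemma int_grading_subset_kspan_monomials:
  assumes "n \<ge> 0"
  shows "int_grading G n \<subseteq> module.span (kscale (*)) (monomial ` exps nvars (nat n))"
proof -
  have "int_grading G n \<subseteq> module.span (kscale (*)) (degree_monomial_multiples (*) {(0, 1)} n)"
    using one_in_G_zero fin_gen_module_mult module_mult
    by (intro graded_component_subset_kspan[OF graded_module_int_grading])
      (auto simp: int_grading_def span_mult_one)
  moreover have "degree_monomial_multiples (*) {(0, 1)} n = monomial ` exps nvars (nat n)"
    using assms unfolding degree_monomial_multiples_def by auto
  ultimately show ?thesis by simp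
qed

lemma graded_quotient_component_eq_span_monomials:
  fixes smulQ :: "'r \<Rightarrow> 'q::ab_group_add \<Rightarrow> 'q"
  assumes gq: "graded_module G smulQ QG"
    and \<pi>: "R_linear (*) smulQ \<pi>" "surj \<pi>" "\<forall>n. \<pi> ` int_grading G n \<subseteq> QG n"
  shows "QG n = (if n < 0 then {0}
    else module.span (kscale smulQ) ((\<lambda>u. \<pi> (monomial u)) ` exps nvars (nat n)))"
proof -
  note Q = graded_moduleD[OF gq]
  interpret VQ: vector_space "kscale smulQ" using vector_space_kscale[OF Q(1)] .
  interpret P: Vector_Spaces.linear "kscale (*)" "kscale smulQ" \<pi>
    by (rule linear_kscale_if_R_linear[OF module_mult Q(1) \<pi>(1)])
  let ?E = "(\<lambda>u. \<pi> (monomial u)) ` exps nvars (nat n)"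
  have \<pi>_image: "\<pi> ` int_grading G n = QG n"
    by (rule graded_surj_component[OF graded_module_int_grading gq \<pi>])
  have "QG n = VQ.span ?E" if "n \<ge> 0"
  proof
    have "QG n \<subseteq> \<pi> ` module.span (kscale (*)) (monomial ` exps nvars (nat n))"
      using int_grading_subset_kspan_monomials[OF that] \<pi>_image by blast
    then show "QG n \<subseteq> VQ.span ?E"
      using P.span_image[of "monomial ` exps nvars (nat n)"] by (simp add: image_image)
    have "?E \<subseteq> QG n" using monomial_in_G that \<pi>_image by (auto simp: int_grading_def)
    then show "VQ.span ?E \<subseteq> QG n" by (rule VQ.span_minimal[OF _ subspace_graded_component[OF gq]])
  qed
  moreover have "QG n = {0}" if "n < 0" using \<pi>_image that P.zero by (simp add: int_grading_def)
  ultimately show ?thesis by simp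
qed

text \<open>With \<open>e u = \<pi> (monomial u)\<close>, the Hilbert function of a graded quotient of \<open>R\<close> counts
  the exponent vectors outside the monoid ideal of reducible ones.\<close>

theorem hilbert_series_cyclic_poly_over_one_minus_X_pow:
  fixes smulQ :: "'r \<Rightarrow> 'q::ab_group_add \<Rightarrow> 'q"
  assumes gq: "graded_module G smulQ QG"
    and \<pi>: "R_linear (*) smulQ \<pi>" "surj \<pi>" "\<forall>n. \<pi> ` int_grading G n \<subseteq> QG n"
  obtains p :: "int poly"
  where "hilbert_series iota smulQ QG * (1 - fls_X) ^ nvars = fps_to_fls (fps_of_poly p)"
proof -
  note Q = graded_moduleD[OF gq]
  interpret VQ: vector_space "kscale smulQ" using vector_space_kscale[OF Q(1)] .
  define e where "e u = \<pi> (monomial u)" for u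
  have e_add: "e (map2 (+) u w) = smulQ (monomial w) (e u)" if "length u = nvars" "length w = nvars" for u w
    using \<pi>(1) unfolding e_def monomial_add[OF that] R_linear_def by (metis mult.commute)
  define F where "F = Abs_fps (\<lambda>k. int (card (exps nvars k - reducible_exps smulQ e)))"
  have rank: "int (graded_rank iota smulQ QG n) = (if n < 0 then 0 else F $ nat n)" for n
    using graded_quotient_component_eq_span_monomials[OF gq \<pi>, of n, folded e_def]
      VQ.dim_zero_space dim_span_exps_eq_card_not_reducible[OF Q(1)]
    by (simp add: graded_rank_def F_def)
  have H: "hilbert_series iota smulQ QG = fps_to_fls F"
  proof (rule fls_eqI)
    fix n
    have "fls_nth (hilbert_series iota smulQ QG) n = int (graded_rank iota smulQ QG n)"
      unfolding hilbert_series_def by (rule nth_Abs_fls_lower_bound[of 0]) (simp add: rank)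
    then show "fls_nth (hilbert_series iota smulQ QG) n = fls_nth (fps_to_fls F) n"
      using rank[of n] by simp
  qed
  obtain p where p: "F * (1 - fps_X) ^ nvars = fps_of_poly p"
    using poly_over_one_minus_X_pow_card_exps_diff[OF upward_closed_reducible_exps[OF Q(1) e_add]]
    unfolding F_def poly_over_one_minus_X_pow_def by blast
  have "hilbert_series iota smulQ QG * (1 - fls_X) ^ nvars = fps_to_fls (F * (1 - fps_X) ^ nvars)"
    by (simp add: H fls_times_fps_to_fls fps_to_fls_power)
  then show ?thesis using that p by simp
qed

section \<open>Hilbert series of \<open>R\<close> for an exact pair of zero divisors\<close>

theorem hilbert_series_exact_zero_divisor_pair:
  fixes smulQ :: "'r \<Rightarrow> 'q::ab_group_add \<Rightarrow> 'q"
  assumes a: "a \<in> G 1" and b: "b \<in> G 1" and ez: "exact_zero_divisor_pair a b"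
    and gq: "graded_module G smulQ QG"
    and \<pi>: "R_linear (*) smulQ \<pi>" "surj \<pi>" "\<forall>n. \<pi> ` int_grading G n \<subseteq> QG n"
      "{x. \<pi> x = 0} = range ((*) a)"
  shows "hilbert_series iota (*) (int_grading G) = (1 + fls_X) * hilbert_series iota smulQ QG"
proof -
  obtain \<psi> where iso: "R_linear smulQ (*) \<psi>" "inj \<psi>" "range \<psi> = {x. a * x = 0}"
    "\<And>x. \<psi> (\<pi> x) = b * x"
    using exact_zero_divisor_pair_annihilator_iso[OF ez \<pi>(1,2,4)] by blast
  have "\<psi> ` QG n \<subseteq> int_grading G (n + 1)" for n
  proof
    fix z assume "z \<in> \<psi> ` QG n"
    then obtain q where q: "q \<in> QG n" "z = \<psi> q" by auto
    then have "q \<in> \<pi> ` int_grading G n"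
      using graded_surj_component[OF graded_module_int_grading gq \<pi>(1-3), of n] by simp
    then obtain y where "y \<in> int_grading G n" "z = b * y" using q(2) iso(4) by auto
    then show "z \<in> int_grading G (n + 1)"
      using graded_moduleD(3)[OF graded_module_int_grading b] by (simp add: add.commute[of 1])
  qed
  then show ?thesis
    by (intro hilbert_series_eq_if_annihilator_iso[OF a graded_module_int_grading
          fin_gen_module_mult gq \<pi> iso(1-3)]) blast
qed

text \<open>By rationality, \<open>H\<^sub>R(t) (1 - t)\<^sup>d\<close> is a polynomial with the factor \<open>1 + t\<close>; this is
  how \<open>H\<^sub>R(-1) = 0\<close> is expressed.\<close>

theorem hilbert_series_exact_zero_divisor_pair_vanishes_at_minus_one:
  fixes smulQ :: "'r \<Rightarrow> 'q::ab_group_add \<Rightarrow> 'q"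
  assumes a: "a \<in> G 1" and b: "b \<in> G 1" and ez: "exact_zero_divisor_pair a b"
    and gq: "graded_module G smulQ QG"
    and \<pi>: "R_linear (*) smulQ \<pi>" "surj \<pi>" "\<forall>n. \<pi> ` int_grading G n \<subseteq> QG n"
      "{x. \<pi> x = 0} = range ((*) a)"
  shows "hilbert_series iota (*) (int_grading G) = (1 + fls_X) * hilbert_series iota smulQ QG \<and>
    (\<exists>(p :: int poly) (d :: nat).
       hilbert_series iota (*) (int_grading G) * (1 - fls_X) ^ d = fps_to_fls (fps_of_poly p) \<and>
       poly p (-1) = 0)"
proof
  show H: "hilbert_series iota (*) (int_grading G) = (1 + fls_X) * hilbert_series iota smulQ QG"
    by (rule hilbert_series_exact_zero_divisor_pair[OF assms])
  obtain p where p: "hilbert_series iota smulQ QG * (1 - fls_X) ^ nvars = fps_to_fls (fps_of_poly p)"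
    by (rule hilbert_series_cyclic_poly_over_one_minus_X_pow[OF gq \<pi>(1-3)])
  have one_plus_X: "fps_of_poly [:1, 1:] = (1 + fps_X :: int fps)"
    by (rule fps_ext) (auto simp: coeff_pCons split: nat.splits)
  have "hilbert_series iota (*) (int_grading G) * (1 - fls_X) ^ nvars
      = (1 + fls_X) * fps_to_fls (fps_of_poly p)"
    by (simp add: H mult.assoc p)
  also have "\<dots> = fps_to_fls (fps_of_poly ([:1, 1:] * p))"
    by (simp only: fps_of_poly_mult one_plus_X fls_times_fps_to_fls fps_to_fls_plus
        fps_one_to_fls fps_X_to_fls)
  finally show "\<exists>(p :: int poly) (d :: nat).
       hilbert_series iota (*) (int_grading G) * (1 - fls_X) ^ d = fps_to_fls (fps_of_poly p) \<and>
       poly p (-1) = 0"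
    by (intro exI[of _ "[:1, 1:] * p"] exI[of _ nvars]) simp
qed

end

theorem lemma2p1:
  fixes iota :: "'k::field \<Rightarrow> 'r::comm_ring_1"
    and G :: "nat \<Rightarrow> 'r set"
    and a :: 'r
  assumes R: "standard_graded_algebra iota G"
    and a1: "a \<in> G 1"
  shows
   "(\<forall>(smul :: 'r \<Rightarrow> 'm::ab_group_add \<Rightarrow> 'm) MG (smulQ :: 'r \<Rightarrow> 'q::ab_group_add \<Rightarrow> 'q) QG \<pi> \<psi>.
       graded_module G smul MG \<and> fin_gen_module smul \<and>
       \<comment> \<open>Q with \<pi> is the graded quotient module M/aM\<close>
       graded_module G smulQ QG \<and>
       R_linear smul smulQ \<pi> \<and> surj \<pi> \<and> (\<forall>n. \<pi> ` MG n \<subseteq> QG n) \<and>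
       {x. \<pi> x = 0} = range (smul a) \<and>
       \<comment> \<open>\<psi> is a graded isomorphism (M/aM)(-1) \<cong> (0 :_M a)\<close>
       R_linear smulQ smul \<psi> \<and> inj \<psi> \<and> range \<psi> = {x. smul a x = 0} \<and>
       (\<forall>n. \<psi> ` QG n \<subseteq> MG (n + 1))
     \<longrightarrow> hilbert_series iota smul MG = (1 + fls_X) * hilbert_series iota smulQ QG)
    \<and>
    (\<forall>b (smulQ :: 'r \<Rightarrow> 'q2::ab_group_add \<Rightarrow> 'q2) QG \<pi>.
       b \<in> G 1 \<and> exact_zero_divisor_pair a b \<and>
       \<comment> \<open>Q with \<pi> is the graded quotient module R/aR\<close>
       graded_module G smulQ QG \<and>
       R_linear (*) smulQ \<pi> \<and> surj \<pi> \<and> (\<forall>n. \<pi> ` int_grading G n \<subseteq> QG n) \<and>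
       {x. \<pi> x = 0} = range ((*) a)
     \<longrightarrow> hilbert_series iota (*) (int_grading G) = (1 + fls_X) * hilbert_series iota smulQ QG \<and>
         (\<exists>(p :: int poly) (d :: nat).
            hilbert_series iota (*) (int_grading G) * (1 - fls_X) ^ d = fps_to_fls (fps_of_poly p) \<and>
            poly p (-1) = 0))"
proof -
  obtain B where B: "finite B" "B \<subseteq> G 1" "alg_gen iota B = UNIV"
    using R unfolding standard_graded_algebra_def by blast
  obtain xs where "set xs = B" using finite_list[OF B(1)] by blast
  then interpret standard_graded_gens iota G xs
    by unfold_locales (use R B in auto)
  show ?thesis
    by (rule conjI; intro allI impI; elim conjE)
      (rule hilbert_series_eq_if_annihilator_iso[OF a1]
        hilbert_series_exact_zero_divisor_pair_vanishes_at_minus_one[OF a1]; assumption)+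
qed

end
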